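(* For a partition $\lambda=(\lambda_1,\dots,\lambda_r)$ of length $r\le n$, the factorial Hall–Littlewood $P$-polynomial $HP_\lambda(x_1,\dots,x_n;t|\mathbf b)$ is the coefficient of $u_1^{-\lambda_1}\cdots u_r^{-\lambda_r}$ in $$\frac1{(1-t)^r}\prod_{i=1}^r\Big(\prod_{j=1}^n\frac{u_i-tx_j}{u_i-x_j}\prod_{j=1}^{i-1}\frac{u_i-u_j}{u_i-tu_j}-t^{n-i+1}\Big)\times\prod_{i=1}^r\prod_{k=1}^{\lambda_i}\frac{u_i+b_k}{u_i}.$$
   Context: $x_1,\dots,x_n$, $t$, $\mathbf b=(b_1,b_2,\dots)$ are indeterminates. The factorial Hall–Littlewood $P$-polynomial (the specialization of the universal one to the additive formal group law $F(u,v)=u+v$) is, for $\lambda$ of length $r\le n$, $$HP_\lambda(x_1,\dots,x_n;t|\mathbf b):=\sum_{\bar w\in S_n/(S_1)^r\times S_{n-r}}w\cdot\Big[\prod_{i=1}^r\prod_{k=1}^{\lambda_i}(x_i+b_k)\prod_{i=1}^r\prod_{j=i+1}^n\frac{x_i-tx_j}{x_i-x_j}\Big],$$ $S_n$ permuting only the $x$'s, sum over coset representatives. Expansion convention: $1/(u_i-x_j)$ is expanded in powers of $x_j$, and for $j<i$, $1/(u_i-tu_j)$ is expanded in powers of $u_j$ with coefficients Laurent in $u_i$. *)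

theory Defs
  imports "HOL-Combinatorics.Permutations"
begin

text \<open>Variables are 1-based: x 1, ..., x n; b 1, b 2, ...; lam 1, ..., lam r.
  The indeterminates are specialised to elements of an arbitrary field
  (with x 1..x n pairwise distinct and t not 1, so that all denominators are defined).
  The permutation w acts by w(f(x 1,...,x n)) = f(x (w 1), ..., x (w n)).\<close>

definition HP_summand ::
  "nat \<Rightarrow> nat \<Rightarrow> (nat \<Rightarrow> nat) \<Rightarrow> (nat \<Rightarrow> 'a::field) \<Rightarrow> 'a \<Rightarrow> (nat \<Rightarrow> 'a) \<Rightarrow> 'a" where
  "HP_summand n r lam y t b =
     (\<Prod>i=1..r. \<Prod>k=1..lam i. (y i + b k)) *
     (\<Prod>i=1..r. \<Prod>j=i+1..n. (y i - t * y j) / (y i - y j))"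

definition young_sub :: "nat \<Rightarrow> nat \<Rightarrow> (nat \<Rightarrow> nat) set" where
  "young_sub n r = {h. h permutes {1..n} \<and> (\<forall>i\<in>{1..r}. h i = i)}"

definition cosets_Sn :: "nat \<Rightarrow> nat \<Rightarrow> (nat \<Rightarrow> nat) set set" where
  "cosets_Sn n r = (\<lambda>w. (\<lambda>h. w \<circ> h) ` young_sub n r) ` {w. w permutes {1..n}}"

definition HP ::
  "nat \<Rightarrow> nat \<Rightarrow> (nat \<Rightarrow> nat) \<Rightarrow> (nat \<Rightarrow> 'a::field) \<Rightarrow> 'a \<Rightarrow> (nat \<Rightarrow> 'a) \<Rightarrow> 'a" where
  "HP n r lam x t b =
     (\<Sum>C\<in>cosets_Sn n r. HP_summand n r lam (x \<circ> (SOME w. w \<in> C)) t b)"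

text \<open>A series is its coefficient function on exponent vectors e :: nat => int
  (the coefficient of the monomial prod_l u_l^(e l)).  Multiplication is the Cauchy
  product; for the series occurring below (supported on exponent vectors vanishing
  outside {1..r} with bounded-above suffix sums) all these sums are finite.\<close>

type_synonym 'a lser = "(nat \<Rightarrow> int) \<Rightarrow> 'a"

definition lmono :: "(nat \<Rightarrow> int) \<Rightarrow> 'a::comm_ring_1 lser" where
  "lmono d = (\<lambda>e. if e = d then 1 else 0)"

definition lconst :: "'a::comm_ring_1 \<Rightarrow> 'a lser" where
  "lconst c = (\<lambda>e. if e = (\<lambda>_. 0) then c else 0)"

definition ladd :: "'a::comm_ring_1 lser \<Rightarrow> 'a lser \<Rightarrow> 'a lser" where
  "ladd f g = (\<lambda>e. f e + g e)"

definition lsub :: "'a::comm_ring_1 lser \<Rightarrow> 'a lser \<Rightarrow> 'a lser" where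
  "lsub f g = (\<lambda>e. f e - g e)"

definition lscale :: "'a::comm_ring_1 \<Rightarrow> 'a lser \<Rightarrow> 'a lser" where
  "lscale c f = (\<lambda>e. c * f e)"

definition lmult :: "'a::comm_ring_1 lser \<Rightarrow> 'a lser \<Rightarrow> 'a lser" where
  "lmult f g = (\<lambda>e. \<Sum>a\<in>{a. f a \<noteq> 0 \<and> g (\<lambda>l. e l - a l) \<noteq> 0}. f a * g (\<lambda>l. e l - a l))"

definition lprod :: "(nat \<Rightarrow> 'a::comm_ring_1 lser) \<Rightarrow> nat list \<Rightarrow> 'a lser" where
  "lprod F is = foldr (\<lambda>i acc. lmult (F i) acc) is (lconst 1)"

definition uvec :: "nat \<Rightarrow> nat \<Rightarrow> int" where
  "uvec i = (\<lambda>l. if l = i then 1 else 0)"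

definition uvar :: "nat \<Rightarrow> 'a::comm_ring_1 lser" where
  "uvar i = lmono (uvec i)"

text \<open>1/(u^alpha - c u^beta), expanded in powers of the second term:
  sum over m >= 0 of c^m u^(m beta - (m+1) alpha).\<close>
definition lgeom :: "(nat \<Rightarrow> int) \<Rightarrow> 'a::comm_ring_1 \<Rightarrow> (nat \<Rightarrow> int) \<Rightarrow> 'a lser" where
  "lgeom alpha c beta =
     (\<lambda>e. \<Sum>m\<in>{m::nat. e = (\<lambda>l. int m * beta l - (int m + 1) * alpha l)}. c ^ m)"

text \<open>The generating series of the theorem:
  1/(1-t)^r prod_i ( prod_j (u_i - t x_j)/(u_i - x_j) prod_(j<i) (u_i-u_j)/(u_i-t u_j) - t^(n-i+1) )
  * prod_i prod_(k=1..lam i) (u_i + b_k)/u_i,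
  with 1/(u_i - x_j) expanded in powers of x_j and 1/(u_i - t u_j) (j<i) in powers of u_j.\<close>
definition HP_genser ::
  "nat \<Rightarrow> nat \<Rightarrow> (nat \<Rightarrow> nat) \<Rightarrow> (nat \<Rightarrow> 'a::field) \<Rightarrow> 'a \<Rightarrow> (nat \<Rightarrow> 'a) \<Rightarrow> 'a lser" where
  "HP_genser n r lam x t b =
     lscale (1 / (1 - t) ^ r)
       (lmult
         (lprod (\<lambda>i.
             lsub
               (lmult
                 (lprod (\<lambda>j. lmult (lsub (uvar i) (lconst (t * x j)))
                                     (lgeom (uvec i) (x j) (\<lambda>_. 0))) [1..<n+1])
                 (lprod (\<lambda>j. lmult (lsub (uvar i) (uvar j))
                                     (lgeom (uvec i) t (uvec j))) [1..<i]))
               (lconst (t ^ (n - i + 1)))) [1..<r+1])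
         (lprod (\<lambda>i. lprod (\<lambda>k. lmult (ladd (uvar i) (lconst (b k)))
                                        (lmono (\<lambda>l. - uvec i l))) [1..<lam i + 1]) [1..<r+1]))"

end

theory Submission
  imports Defs "HOL-Library.Groups_Big_Fun"
begin

text \<open>Coefficients are computed in the commutative ring of Laurent series in u_1, u_2, ...
  whose exponent vectors have bounded-above suffix sums; it contains the expansions of 1/(u_i - c)
  and 1/(u_i - c u_j), j < i, prescribed in the statement.  The coefficient of u_1^(-lambda_1) is
  a residue in u_1.  By partial fractions prod_j (u_1 - t x_j)/(u_1 - x_j) - t^n equals
  sum_l (1 - t) prod_(m ~= l) (x_l - t x_m)/(x_l - x_m) * u_1/(u_1 - x_l), and the coefficient of
  u_1^0 in u_1/(u_1 - x_l) L is L at u_1 = x_l whenever L has no negative power of u_1.  At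
  u_1 = x_l the factor (u_i - u_1)/(u_i - t u_1) cancels the factor of x_l in row i, so what
  remains is the same generating series in u_2, ..., u_r for the points other than x_l.  Induction
  on r gives (1 - t)^r times a sum over injective words (l_1, ..., l_r), which is the sum over the
  cosets of (S_1)^r x S_(n-r) defining HP_lambda.\<close>

section \<open>Admissible Laurent series\<close>

definition tail_sum :: "nat \<Rightarrow> nat \<Rightarrow> (nat \<Rightarrow> int) \<Rightarrow> int" where
  "tail_sum N k e = (\<Sum>l=k..N. e l)"

definition supported :: "nat \<Rightarrow> (nat \<Rightarrow> int) \<Rightarrow> bool" where
  "supported N e \<longleftrightarrow> e 0 = 0 \<and> (\<forall>l>N. e l = 0)"

text \<open>Supports with bounded-above suffix sums of exponents are closed under addition and any
  exponent vector splits in only finitely many ways into two of them, so the Cauchy product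
  lmult of admissible series has finite coefficient sums.\<close>

definition tail_bounded :: "nat \<Rightarrow> int \<Rightarrow> ('a::zero) lser \<Rightarrow> bool" where
  "tail_bounded N C f \<longleftrightarrow> (\<forall>e. f e \<noteq> 0 \<longrightarrow> supported N e \<and> (\<forall>k\<in>{1..N}. tail_sum N k e \<le> C))"

definition admissible :: "('a::zero) lser \<Rightarrow> bool" where
  "admissible f \<longleftrightarrow> (\<exists>N C. tail_bounded N C f)"

definition tail_box :: "nat \<Rightarrow> int \<Rightarrow> int \<Rightarrow> (nat \<Rightarrow> int) set" where
  "tail_box N lo hi = {a. supported N a \<and> (\<forall>k\<in>{1..N}. lo \<le> tail_sum N k a \<and> tail_sum N k a \<le> hi)}"

lemma tail_sum_Suc: "k \<le> N \<Longrightarrow> tail_sum N k a = a k + tail_sum N (Suc k) a"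
  unfolding tail_sum_def by (simp add: sum.atLeast_Suc_atMost)

lemma tail_sum_empty: "N < k \<Longrightarrow> tail_sum N k a = 0"
  unfolding tail_sum_def by simp

lemma tail_sum_diff: "tail_sum N k (\<lambda>l. a l - b l) = tail_sum N k a - tail_sum N k b"
  unfolding tail_sum_def by (simp add: sum_subtractf)

lemma tail_sum_lincomb: "tail_sum N k (\<lambda>l. p * a l - q * b l) = p * tail_sum N k a - q * tail_sum N k b"
  unfolding tail_sum_def by (simp add: sum_subtractf sum_distrib_left)

lemma tail_sum_uvec: "tail_sum N k (uvec j) = (if k \<le> j \<and> j \<le> N then 1 else 0)"
  unfolding tail_sum_def uvec_def by (simp add: sum.delta)

lemma abs_tail_sum_le: "k \<in> {1..N} \<Longrightarrow> \<bar>tail_sum N k e\<bar> \<le> (\<Sum>k=1..N. \<bar>tail_sum N k e\<bar>)"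
  by (rule member_le_sum) auto

lemma supported_add: "supported N a \<Longrightarrow> supported N b \<Longrightarrow> supported N (\<lambda>l. a l + b l)"
  by (auto simp: supported_def)

lemma supported_zero: "supported N (\<lambda>_. 0)"
  by (simp add: supported_def)

lemma supported_eqI:
  assumes "supported N a" "supported N b" and "\<And>k. k \<in> {1..N} \<Longrightarrow> tail_sum N k a = tail_sum N k b"
  shows "a = b"
proof
  fix l
  have tail_Suc: "tail_sum N (Suc k) a = tail_sum N (Suc k) b" if "k \<in> {1..N}" for k
    using assms(3)[of "Suc k"] tail_sum_empty[of N "Suc k"] that by (cases "Suc k \<le> N") auto
  show "a l = b l"
  proof (cases "l \<in> {1..N}")
    case True
    then show ?thesis
      using tail_sum_Suc[of l N a] tail_sum_Suc[of l N b] assms(3)[OF True] tail_Suc[OF True] by auto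
  next
    case False
    then have "l = 0 \<or> l > N" by auto
    then show ?thesis using assms(1,2) by (auto simp: supported_def)
  qed
qed

lemma finite_tail_box: "finite (tail_box N lo hi)"
proof -
  let ?tails = "\<lambda>a. restrict (\<lambda>k. tail_sum N k a) {1..N}"
  have "inj_on ?tails (tail_box N lo hi)"
  proof (rule inj_onI, rule supported_eqI)
    fix a b k assume "?tails a = ?tails b" and "k \<in> {1..N}"
    then show "tail_sum N k a = tail_sum N k b" by (metis restrict_apply')
  qed (auto simp: tail_box_def)
  moreover have "?tails ` tail_box N lo hi \<subseteq> PiE {1..N} (\<lambda>_. {lo..hi})"
    by (auto simp: tail_box_def)
  ultimately show ?thesis
    by (meson finite_PiE finite_atLeastAtMost finite_atLeastAtMost_int inj_on_finite)
qed

lemma tail_boundedD: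
  "tail_bounded N C f \<Longrightarrow> f a \<noteq> 0 \<Longrightarrow> supported N a \<and> (\<forall>k\<in>{1..N}. tail_sum N k a \<le> C)"
  by (auto simp: tail_bounded_def)

lemma tail_bounded_mono:
  assumes "tail_bounded N C f" "N \<le> N'" "C \<le> C'" "0 \<le> C'"
  shows "tail_bounded N' C' f"
  unfolding tail_bounded_def
proof (intro allI impI conjI ballI)
  fix e assume "f e \<noteq> 0"
  then have supp: "supported N e" and bound: "\<forall>k\<in>{1..N}. tail_sum N k e \<le> C"
    using tail_boundedD[OF assms(1)] by auto
  show "supported N' e" using supp assms(2) by (auto simp: supported_def)
  fix k assume k: "k \<in> {1..N'}"
  have eq: "tail_sum N' k e = tail_sum N k e"
    unfolding tail_sum_def
    by (rule sum.mono_neutral_right) (use supp assms(2) in \<open>auto simp: supported_def\<close>)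
  show "tail_sum N' k e \<le> C'"
  proof (cases "k \<le> N")
    case True
    then show ?thesis using eq bound k assms(3) by force
  next
    case False
    then show ?thesis using eq tail_sum_empty[of N k e] assms(4) by simp
  qed
qed

lemma admissible_common_bound:
  assumes "admissible f" "admissible g"
  obtains N C where "tail_bounded N C f" "tail_bounded N C g" "0 \<le> C"
proof -
  obtain N1 C1 N2 C2 where f: "tail_bounded N1 C1 f" and g: "tail_bounded N2 C2 g"
    using assms by (auto simp: admissible_def)
  show ?thesis
  proof (rule that)
    show "tail_bounded (max N1 N2) (max 0 (max C1 C2)) f" by (rule tail_bounded_mono[OF f]) auto
    show "tail_bounded (max N1 N2) (max 0 (max C1 C2)) g" by (rule tail_bounded_mono[OF g]) auto
  qed auto
qed

lemma lmult_support_tail_box: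
  assumes f: "tail_bounded N C1 f" and g: "tail_bounded N C2 g"
    and "f a \<noteq> 0" and "g (\<lambda>l. e l - a l) \<noteq> 0"
  shows "a \<in> tail_box N (- C2 - (\<Sum>k=1..N. \<bar>tail_sum N k e\<bar>)) C1" and "supported N e"
proof -
  have sa: "supported N a" and ba: "\<forall>k\<in>{1..N}. tail_sum N k a \<le> C1"
    using tail_boundedD[OF f] assms(3) by auto
  have sb: "supported N (\<lambda>l. e l - a l)" and bb: "\<forall>k\<in>{1..N}. tail_sum N k (\<lambda>l. e l - a l) \<le> C2"
    using tail_boundedD[OF g] assms(4) by auto
  show "supported N e" using supported_add[OF sa sb] by simp
  have "- C2 - (\<Sum>k=1..N. \<bar>tail_sum N k e\<bar>) \<le> tail_sum N k a" if "k \<in> {1..N}" for k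
    using abs_tail_sum_le[OF that, of e] bb that tail_sum_diff[of N k e a] by fastforce
  then show "a \<in> tail_box N (- C2 - (\<Sum>k=1..N. \<bar>tail_sum N k e\<bar>)) C1"
    using sa ba by (auto simp: tail_box_def)
qed

lemma finite_lmult_support:
  assumes "tail_bounded N C1 f" and "tail_bounded N C2 g"
  shows "finite {a. f a \<noteq> 0 \<and> g (\<lambda>l. e l - a l) \<noteq> 0}"
  by (rule finite_subset[OF _ finite_tail_box]) (use lmult_support_tail_box(1)[OF assms] in blast)

lemma tail_bounded_lmult:
  assumes f: "tail_bounded N C1 f" and g: "tail_bounded N C2 g"
  shows "tail_bounded N (C1 + C2) (lmult f g)"
  unfolding tail_bounded_def
proof (intro allI impI conjI ballI)
  fix e assume "lmult f g e \<noteq> 0"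
  then obtain a where fa: "f a \<noteq> 0" and ga: "g (\<lambda>l. e l - a l) \<noteq> 0"
    unfolding lmult_def by (metis (mono_tags, lifting) empty_Collect_eq sum.empty)
  show "supported N e" by (rule lmult_support_tail_box(2)[OF f g fa ga])
  fix k assume "k \<in> {1..N}"
  then show "tail_sum N k e \<le> C1 + C2"
    using tail_boundedD[OF f fa] tail_boundedD[OF g ga] tail_sum_diff[of N k e a] by fastforce
qed

lemma admissible_lmult: "admissible f \<Longrightarrow> admissible g \<Longrightarrow> admissible (lmult f g)"
  by (metis admissible_common_bound admissible_def tail_bounded_lmult)

lemma lmult_Sum_any:
  assumes "admissible f" "admissible g"
  shows "lmult f g e = (\<Sum>a. f a * g (\<lambda>l. e l - a l))"
proof -
  obtain N C where "tail_bounded N C f" "tail_bounded N C g"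
    using admissible_common_bound[OF assms] by blast
  from finite_lmult_support[OF this, of e] show ?thesis
    unfolding lmult_def by (intro Sum_any.expand_superset[symmetric]) auto
qed

lemma Sum_any_translate:
  fixes F :: "(nat \<Rightarrow> int) \<Rightarrow> 'a::comm_monoid_add"
  shows "(\<Sum>a. F a) = (\<Sum>c. F (\<lambda>l. d l + c l))"
proof (rule Sum_any.reindex_cong)
  show "bij (\<lambda>c l. d l + c l)"
    by (rule o_bij[where g="\<lambda>a l. a l - d l"]) (auto simp: fun_eq_iff)
qed auto

lemma Sum_any_reflect:
  fixes F :: "(nat \<Rightarrow> int) \<Rightarrow> 'a::comm_monoid_add"
  shows "(\<Sum>a. F a) = (\<Sum>a. F (\<lambda>l. e l - a l))"
proof (rule Sum_any.reindex_cong)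
  show "bij (\<lambda>a l. e l - a l)"
    by (rule o_bij[where g="\<lambda>a l. e l - a l"]) (auto simp: fun_eq_iff)
qed auto

lemma admissible_zero: "admissible (\<lambda>_. 0)"
  by (auto simp: admissible_def tail_bounded_def)

lemma admissible_lconst: "admissible (lconst c)"
  unfolding admissible_def tail_bounded_def lconst_def
  by (rule exI[of _ 0], rule exI[of _ 0]) (auto simp: supported_def tail_sum_def)

lemma tail_bounded_ladd: "tail_bounded N C f \<Longrightarrow> tail_bounded N C g \<Longrightarrow> tail_bounded N C (ladd f g)"
  unfolding tail_bounded_def ladd_def by (metis add.right_neutral add_0)

lemma tail_bounded_lsub: "tail_bounded N C f \<Longrightarrow> tail_bounded N C g \<Longrightarrow> tail_bounded N C (lsub f g)"
  unfolding tail_bounded_def lsub_def by (metis diff_self diff_zero eq_iff_diff_eq_0)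

lemma admissible_ladd: "admissible f \<Longrightarrow> admissible g \<Longrightarrow> admissible (ladd f g)"
  by (metis admissible_common_bound admissible_def tail_bounded_ladd)

lemma admissible_lsub: "admissible f \<Longrightarrow> admissible g \<Longrightarrow> admissible (lsub f g)"
  by (metis admissible_common_bound admissible_def tail_bounded_lsub)

lemma admissible_uminus: "admissible f \<Longrightarrow> admissible (\<lambda>e. - f e :: 'a::comm_ring_1)"
  unfolding admissible_def tail_bounded_def by simp

lemma lmult_commute:
  assumes "admissible f" "admissible g"
  shows "lmult f g = lmult g f"
proof
  fix e
  have "lmult f g e = (\<Sum>a. f a * g (\<lambda>l. e l - a l))" by (rule lmult_Sum_any[OF assms])
  also have "\<dots> = (\<Sum>a. g a * f (\<lambda>l. e l - a l))"
    by (subst Sum_any_reflect[where e=e]) (simp add: mult.commute)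
  also have "\<dots> = lmult g f e" by (rule lmult_Sum_any[OF assms(2,1), symmetric])
  finally show "lmult f g e = lmult g f e" .
qed

lemma lmult_lconst_one: "admissible f \<Longrightarrow> lmult (lconst 1) f = f"
proof
  fix e assume "admissible f"
  have "lmult (lconst 1) f e = (\<Sum>a. lconst 1 a * f (\<lambda>l. e l - a l))"
    by (rule lmult_Sum_any[OF admissible_lconst \<open>admissible f\<close>])
  also have "\<dots> = (\<Sum>a. if a = (\<lambda>_. 0) then f (\<lambda>l. e l - a l) else 0)"
    by (rule Sum_any.cong) (auto simp: lconst_def)
  finally show "lmult (lconst 1) f e = f e" by simp
qed

lemma lmult_ladd_distrib:
  assumes "admissible f" "admissible g" "admissible h"
  shows "lmult (ladd f g) h = ladd (lmult f h) (lmult g h)"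
proof
  fix e
  obtain N C where f: "tail_bounded N C f" and h: "tail_bounded N C h"
    using admissible_common_bound[OF assms(1,3)] by blast
  obtain N' C' where g: "tail_bounded N' C' g" and h': "tail_bounded N' C' h"
    using admissible_common_bound[OF assms(2,3)] by blast
  have "lmult (ladd f g) h e = (\<Sum>a. f a * h (\<lambda>l. e l - a l) + g a * h (\<lambda>l. e l - a l))"
    by (subst lmult_Sum_any[OF admissible_ladd[OF assms(1,2)] assms(3)])
      (simp add: ladd_def distrib_right)
  also have "\<dots> = (\<Sum>a. f a * h (\<lambda>l. e l - a l)) + (\<Sum>a. g a * h (\<lambda>l. e l - a l))"
    by (rule Sum_any.distrib)
      (rule finite_subset[OF _ finite_lmult_support[OF f h, of e]]
         finite_subset[OF _ finite_lmult_support[OF g h', of e]], auto)+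
  also have "\<dots> = ladd (lmult f h) (lmult g h) e"
    by (simp add: ladd_def lmult_Sum_any assms)
  finally show "lmult (ladd f g) h e = ladd (lmult f h) (lmult g h) e" .
qed

lemma lmult_triple_support:
  fixes f g h :: "'a::comm_ring_1 lser"
  assumes f: "tail_bounded N C f" and g: "tail_bounded N C g" and h: "tail_bounded N C h"
    and "0 \<le> C" and nz: "f b * g (\<lambda>l. a l - b l) * h (\<lambda>l. e l - a l) \<noteq> 0"
  shows "a \<in> tail_box N (- 2 * C - (\<Sum>k=1..N. \<bar>tail_sum N k e\<bar>)) (2 * C)"
    and "b \<in> tail_box N (- 2 * C - (\<Sum>k=1..N. \<bar>tail_sum N k e\<bar>)) (2 * C)"
proof -
  have "f b \<noteq> 0" "g (\<lambda>l. a l - b l) \<noteq> 0" "h (\<lambda>l. e l - a l) \<noteq> 0"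
    using nz by auto
  then have F: "supported N b \<and> (\<forall>k\<in>{1..N}. tail_sum N k b \<le> C)"
    and G: "supported N (\<lambda>l. a l - b l) \<and> (\<forall>k\<in>{1..N}. tail_sum N k (\<lambda>l. a l - b l) \<le> C)"
    and H: "\<forall>k\<in>{1..N}. tail_sum N k (\<lambda>l. e l - a l) \<le> C"
    using tail_boundedD[OF f] tail_boundedD[OF g] tail_boundedD[OF h] by auto
  have "supported N a" using supported_add[of N b "\<lambda>l. a l - b l"] F G by simp
  moreover have "- 2 * C - (\<Sum>k=1..N. \<bar>tail_sum N k e\<bar>) \<le> tail_sum N k a \<and> tail_sum N k a \<le> 2 * C
      \<and> - 2 * C - (\<Sum>k=1..N. \<bar>tail_sum N k e\<bar>) \<le> tail_sum N k b \<and> tail_sum N k b \<le> 2 * C"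
    if k: "k \<in> {1..N}" for k
  proof -
    have "tail_sum N k b \<le> C" "tail_sum N k (\<lambda>l. a l - b l) \<le> C" "tail_sum N k (\<lambda>l. e l - a l) \<le> C"
      using F G H k by auto
    moreover have "- (\<Sum>k=1..N. \<bar>tail_sum N k e\<bar>) \<le> tail_sum N k e"
      using abs_tail_sum_le[OF k, of e] by (simp add: abs_le_iff)
    ultimately show ?thesis
      using \<open>0 \<le> C\<close> tail_sum_diff[of N k a b] tail_sum_diff[of N k e a] by linarith
  qed
  ultimately show "a \<in> tail_box N (- 2 * C - (\<Sum>k=1..N. \<bar>tail_sum N k e\<bar>)) (2 * C)"
    and "b \<in> tail_box N (- 2 * C - (\<Sum>k=1..N. \<bar>tail_sum N k e\<bar>)) (2 * C)"
    using F by (auto simp: tail_box_def)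
qed

lemma lmult_assoc:
  assumes "admissible f" "admissible g" "admissible h"
  shows "lmult (lmult f g) h = lmult f (lmult g h)"
proof
  fix e
  obtain N0 C0 where f0: "tail_bounded N0 C0 f" and g0: "tail_bounded N0 C0 g"
    using admissible_common_bound[OF assms(1,2)] by blast
  obtain N1 C1 where h1: "tail_bounded N1 C1 h" and "0 \<le> C1"
    using admissible_common_bound[OF assms(3,3)] by blast
  define N where "N = max N0 N1"
  define C where "C = max C0 C1"
  have f: "tail_bounded N C f" and g: "tail_bounded N C g" and h: "tail_bounded N C h"
    using tail_bounded_mono[OF f0, of N C] tail_bounded_mono[OF g0, of N C]
      tail_bounded_mono[OF h1, of N C] \<open>0 \<le> C1\<close> by (simp_all add: N_def C_def)
  have "0 \<le> C" using \<open>0 \<le> C1\<close> by (simp add: C_def)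
  define B where "B = tail_box N (- 2 * C - (\<Sum>k=1..N. \<bar>tail_sum N k e\<bar>)) (2 * C)"
  have "lmult (lmult f g) h e = (\<Sum>a. \<Sum>b. f b * g (\<lambda>l. a l - b l) * h (\<lambda>l. e l - a l))"
    unfolding lmult_Sum_any[OF admissible_lmult[OF assms(1,2)] assms(3)] lmult_Sum_any[OF assms(1,2)]
  proof (rule Sum_any.cong, rule Sum_any_left_distrib)
    fix a
    show "finite {b. f b * g (\<lambda>l. a l - b l) \<noteq> 0}"
      by (rule finite_subset[OF _ finite_lmult_support[OF f g, of a]]) auto
  qed
  also have "\<dots> = (\<Sum>b. \<Sum>a. f b * g (\<lambda>l. a l - b l) * h (\<lambda>l. e l - a l))"
    by (rule Sum_any.swap[of "B \<times> B"])
      (use lmult_triple_support[OF f g h \<open>0 \<le> C\<close>] in \<open>auto simp: B_def finite_tail_box\<close>)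
  also have "\<dots> = (\<Sum>b. f b * (\<Sum>c. g c * h (\<lambda>l. (e l - b l) - c l)))"
  proof (rule Sum_any.cong)
    fix b
    have "(\<Sum>a. f b * g (\<lambda>l. a l - b l) * h (\<lambda>l. e l - a l))
        = (\<Sum>c. f b * (g c * h (\<lambda>l. (e l - b l) - c l)))"
      by (subst Sum_any_translate[where d=b]) (simp add: mult.assoc algebra_simps)
    also have "\<dots> = f b * (\<Sum>c. g c * h (\<lambda>l. (e l - b l) - c l))"
      by (rule Sum_any_right_distrib[symmetric])
        (rule finite_subset[OF _ finite_lmult_support[OF g h, of "\<lambda>l. e l - b l"]], auto)
    finally show "(\<Sum>a. f b * g (\<lambda>l. a l - b l) * h (\<lambda>l. e l - a l))
        = f b * (\<Sum>c. g c * h (\<lambda>l. (e l - b l) - c l))" .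
  qed
  also have "\<dots> = lmult f (lmult g h) e"
    by (simp add: lmult_Sum_any assms admissible_lmult)
  finally show "lmult (lmult f g) h e = lmult f (lmult g h) e" .
qed

typedef (overloaded) ('a::comm_ring_1) laurent = "{f :: 'a lser. admissible f}"
  morphisms lcoeff Abs_laurent
  by (rule exI[of _ "\<lambda>_. 0"]) (simp add: admissible_zero)

setup_lifting type_definition_laurent

instantiation laurent :: (comm_ring_1) comm_ring_1
begin
lift_definition zero_laurent :: "'a laurent" is "\<lambda>_. 0" by (rule admissible_zero)
lift_definition one_laurent :: "'a laurent" is "lconst 1" by (rule admissible_lconst)
lift_definition plus_laurent :: "'a laurent \<Rightarrow> 'a laurent \<Rightarrow> 'a laurent" is ladd
  by (rule admissible_ladd)
lift_definition minus_laurent :: "'a laurent \<Rightarrow> 'a laurent \<Rightarrow> 'a laurent" is lsub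
  by (rule admissible_lsub)
lift_definition uminus_laurent :: "'a laurent \<Rightarrow> 'a laurent" is "\<lambda>f e. - f e"
  by (rule admissible_uminus)
lift_definition times_laurent :: "'a laurent \<Rightarrow> 'a laurent \<Rightarrow> 'a laurent" is lmult
  by (rule admissible_lmult)
instance
proof
  fix a b c :: "'a laurent"
  show "a * b * c = a * (b * c)" by transfer (rule lmult_assoc)
  show "a * b = b * a" by transfer (rule lmult_commute)
  show "1 * a = a" by transfer (rule lmult_lconst_one)
  show "(a + b) * c = a * c + b * c" by transfer (rule lmult_ladd_distrib)
  show "a + b + c = a + (b + c)" by transfer (simp add: ladd_def add.assoc)
  show "a + b = b + a" by transfer (simp add: ladd_def add.commute)
  show "0 + a = a" by transfer (simp add: ladd_def)
  show "- a + a = 0" by transfer (simp add: ladd_def)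
  show "a - b = a + - b" by transfer (simp add: lsub_def ladd_def)
  show "(0::'a laurent) \<noteq> 1" by transfer (metis lconst_def zero_neq_one)
qed
end

lemma lcoeff_times: "lcoeff (a * b) = lmult (lcoeff a) (lcoeff b)" by transfer simp
lemma lcoeff_plus: "lcoeff (a + b) = ladd (lcoeff a) (lcoeff b)" by transfer simp
lemma lcoeff_minus: "lcoeff (a - b) = lsub (lcoeff a) (lcoeff b)" by transfer simp
lemma lcoeff_one: "lcoeff 1 = lconst 1" by transfer simp
lemma lcoeff_zero: "lcoeff 0 = (\<lambda>_. 0)" by transfer simp

lemma admissible_lcoeff: "admissible (lcoeff a)"
  using lcoeff by auto

lemma lcoeff_Abs_laurent: "admissible f \<Longrightarrow> lcoeff (Abs_laurent f) = f"
  by (simp add: Abs_laurent_inverse)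

lemma lcoeff_sum: "lcoeff (sum f A) e = (\<Sum>a\<in>A. lcoeff (f a) e)"
  by (induction A rule: infinite_finite_induct) (simp_all add: lcoeff_zero lcoeff_plus ladd_def)

lemma lcoeff_times_nonzeroD:
  "lcoeff (A * B) a \<noteq> 0 \<Longrightarrow> \<exists>b. lcoeff A b \<noteq> 0 \<and> lcoeff B (\<lambda>l. a l - b l) \<noteq> 0"
  unfolding lcoeff_times lmult_def by (metis (mono_tags, lifting) empty_Collect_eq sum.empty)

section \<open>Scalars, monomials and geometric series\<close>

definition scalar :: "'a::comm_ring_1 \<Rightarrow> 'a laurent" where
  "scalar c = Abs_laurent (lconst c)"

definition monom :: "(nat \<Rightarrow> int) \<Rightarrow> 'a::comm_ring_1 laurent" where
  "monom d = Abs_laurent (lmono d)"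

definition U :: "nat \<Rightarrow> 'a::comm_ring_1 laurent" where
  "U i = monom (uvec i)"

definition U_inv :: "nat \<Rightarrow> 'a::comm_ring_1 laurent" where
  "U_inv i = monom (\<lambda>l. - uvec i l)"

lemma admissible_lmono:
  assumes "supported N d" shows "admissible (lmono d :: 'a::comm_ring_1 lser)"
proof -
  have "tail_sum N k d \<le> (\<Sum>k=1..N. \<bar>tail_sum N k d\<bar>)" if "k \<in> {1..N}" for k
    using abs_tail_sum_le[OF that, of d] by linarith
  then have "tail_bounded N (\<Sum>k=1..N. \<bar>tail_sum N k d\<bar>) (lmono d :: 'a lser)"
    using assms by (simp add: tail_bounded_def lmono_def)
  then show ?thesis by (auto simp: admissible_def)
qed

lemma lcoeff_scalar: "lcoeff (scalar c) = lconst c"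
  by (simp add: scalar_def lcoeff_Abs_laurent admissible_lconst)

lemma lcoeff_monom: "supported N d \<Longrightarrow> lcoeff (monom d) = lmono d"
  by (simp add: monom_def lcoeff_Abs_laurent admissible_lmono)

lemma lcoeff_monom_mult:
  assumes "supported N d"
  shows "lcoeff (monom d * f) e = lcoeff f (\<lambda>l. e l - d l)"
proof -
  have "lcoeff (monom d * f) e = (\<Sum>a. lmono d a * lcoeff f (\<lambda>l. e l - a l))"
    by (simp only: lcoeff_times lcoeff_monom[OF assms]
        lmult_Sum_any[OF admissible_lmono[OF assms] admissible_lcoeff])
  also have "\<dots> = (\<Sum>a. if a = d then lcoeff f (\<lambda>l. e l - a l) else 0)"
    by (rule Sum_any.cong) (simp add: lmono_def)
  finally show ?thesis by simp
qed

lemma lcoeff_scalar_mult: "lcoeff (scalar c * f) e = c * lcoeff f e"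
proof -
  have "lcoeff (scalar c * f) e = (\<Sum>a. lconst c a * lcoeff f (\<lambda>l. e l - a l))"
    by (simp only: lcoeff_times lcoeff_scalar lmult_Sum_any[OF admissible_lconst admissible_lcoeff])
  also have "\<dots> = (\<Sum>a. if a = (\<lambda>_. 0) then c * lcoeff f (\<lambda>l. e l - a l) else 0)"
    by (rule Sum_any.cong) (simp add: lconst_def)
  finally show ?thesis by simp
qed

lemma scalar_mult: "scalar (a * b) = scalar a * scalar b"
  by (rule lcoeff_inject[THEN iffD1], rule ext) (simp add: lcoeff_scalar_mult lcoeff_scalar lconst_def)

lemma scalar_add: "scalar (a + b) = scalar a + scalar b"
  by (rule lcoeff_inject[THEN iffD1], rule ext) (simp add: lcoeff_plus lcoeff_scalar lconst_def ladd_def)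

lemma scalar_one: "scalar 1 = 1"
  by (rule lcoeff_inject[THEN iffD1]) (simp add: lcoeff_one lcoeff_scalar)

lemma scalar_prod: "finite S \<Longrightarrow> scalar (prod f S) = (\<Prod>x\<in>S. scalar (f x))"
  by (induction S rule: finite_induct) (simp_all add: scalar_one scalar_mult)

lemma monom_mult:
  assumes "supported N a" "supported N b"
  shows "monom a * monom b = monom (\<lambda>l. a l + b l)"
proof (rule lcoeff_inject[THEN iffD1], rule ext)
  fix e
  have "((\<lambda>l. e l - a l) = b) \<longleftrightarrow> (e = (\<lambda>l. a l + b l))"
    by (auto simp: fun_eq_iff algebra_simps)
  then show "lcoeff (monom a * monom b) e = lcoeff (monom (\<lambda>l. a l + b l)) e"
    by (simp add: lcoeff_monom_mult[OF assms(1)] lcoeff_monom[OF assms(2)]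
        lcoeff_monom[OF supported_add[OF assms]] lmono_def)
qed

lemma monom_zero: "monom (\<lambda>_. 0) = 1"
  by (rule lcoeff_inject[THEN iffD1])
    (simp add: lcoeff_monom[OF supported_zero] lcoeff_one lmono_def lconst_def)

lemma supported_uvec: "1 \<le> i \<Longrightarrow> supported i (uvec i)"
  by (auto simp: supported_def uvec_def)

lemma supported_neg_uvec: "1 \<le> i \<Longrightarrow> supported i (\<lambda>l. - uvec i l)"
  by (auto simp: supported_def uvec_def)

lemma lcoeff_U: "1 \<le> i \<Longrightarrow> lcoeff (U i) = uvar i"
  by (simp add: U_def lcoeff_monom[OF supported_uvec] uvar_def)

lemma lcoeff_U_inv: "1 \<le> i \<Longrightarrow> lcoeff (U_inv i) = lmono (\<lambda>l. - uvec i l)"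
  by (simp add: U_inv_def lcoeff_monom[OF supported_neg_uvec])

lemma U_inv_power:
  assumes "1 \<le> v"
  shows "(U_inv v :: 'a::comm_ring_1 laurent) ^ p = monom (\<lambda>l. - int p * uvec v l)"
proof (induction p)
  case 0
  then show ?case by (simp add: monom_zero)
next
  case (Suc p)
  have "supported v (\<lambda>l. - int p * uvec v l)"
    using assms by (auto simp: supported_def uvec_def)
  have "(U_inv v :: 'a laurent) ^ Suc p = monom (\<lambda>l. - uvec v l) * monom (\<lambda>l. - int p * uvec v l)"
    by (simp only: power_Suc Suc.IH) (simp add: U_inv_def)
  also have "\<dots> = monom (\<lambda>l. - int (Suc p) * uvec v l)"
    by (subst monom_mult[OF supported_neg_uvec[OF assms] \<open>supported v _\<close>]) (simp add: algebra_simps)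
  finally show ?case .
qed

lemma lgeom_nonzeroD:
  "lgeom \<alpha> c \<beta> e \<noteq> 0 \<Longrightarrow> \<exists>m::nat. e = (\<lambda>l. int m * \<beta> l - (int m + 1) * \<alpha> l)"
  unfolding lgeom_def by (metis (mono_tags, lifting) empty_Collect_eq sum.empty)

lemma ray_eq_iff:
  assumes "\<alpha> \<noteq> \<beta>"
  shows "(\<lambda>l. int m * (\<beta> l - \<alpha> l)) = (\<lambda>l. int m' * (\<beta> l - \<alpha> l)) \<longleftrightarrow> m = m'"
proof
  assume eq: "(\<lambda>l. int m * (\<beta> l - \<alpha> l)) = (\<lambda>l. int m' * (\<beta> l - \<alpha> l))"
  obtain l where "\<alpha> l \<noteq> \<beta> l" using assms by (auto simp: fun_eq_iff)
  moreover have "(int m - int m') * (\<beta> l - \<alpha> l) = 0"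
    using fun_cong[OF eq, of l] by (simp add: algebra_simps)
  ultimately show "m = m'" by simp
qed simp

lemma lgeom_ray:
  assumes "\<alpha> \<noteq> \<beta>"
  shows "lgeom \<alpha> c \<beta> (\<lambda>l. int m * (\<beta> l - \<alpha> l) - \<alpha> l) = c ^ m"
proof -
  have "(\<lambda>l. int m' * \<beta> l - (int m' + 1) * \<alpha> l) = (\<lambda>l. int m' * (\<beta> l - \<alpha> l) - \<alpha> l)" for m'
    by (simp add: fun_eq_iff algebra_simps)
  moreover have "(\<lambda>l. f l - \<alpha> l) = (\<lambda>l. g l - \<alpha> l) \<longleftrightarrow> f = g" for f g :: "nat \<Rightarrow> int"
    by (auto simp: fun_eq_iff)
  ultimately have "{m'. (\<lambda>l. int m * (\<beta> l - \<alpha> l) - \<alpha> l) = (\<lambda>l. int m' * \<beta> l - (int m' + 1) * \<alpha> l)} = {m}"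
    using ray_eq_iff[OF assms, of m] by auto
  then show ?thesis by (simp add: lgeom_def)
qed

lemma lgeom_off_ray:
  assumes "\<And>m::nat. e \<noteq> (\<lambda>l. int m * (\<beta> l - \<alpha> l))"
  shows "lgeom \<alpha> c \<beta> (\<lambda>l. e l - \<alpha> l) = 0"
proof (rule ccontr)
  assume "lgeom \<alpha> c \<beta> (\<lambda>l. e l - \<alpha> l) \<noteq> 0"
  then obtain m :: nat where eq: "(\<lambda>l. e l - \<alpha> l) = (\<lambda>l. int m * \<beta> l - (int m + 1) * \<alpha> l)"
    using lgeom_nonzeroD by blast
  have "e = (\<lambda>l. int m * (\<beta> l - \<alpha> l))"
  proof
    fix l
    show "e l = int m * (\<beta> l - \<alpha> l)"
      using fun_cong[OF eq, of l] by (simp add: algebra_simps; linarith)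
  qed
  with assms show False by blast
qed

lemma tail_bounded_lgeom:
  assumes i: "1 \<le> i" and \<beta>: "\<beta> = (\<lambda>_. 0) \<or> (\<exists>j. 1 \<le> j \<and> j < i \<and> \<beta> = uvec j)"
  shows "tail_bounded i 0 (lgeom (uvec i) c \<beta>)"
  unfolding tail_bounded_def
proof (intro allI impI conjI ballI)
  fix e assume "lgeom (uvec i) c \<beta> e \<noteq> 0"
  then obtain m :: nat where e: "e = (\<lambda>l. int m * \<beta> l - (int m + 1) * uvec i l)"
    using lgeom_nonzeroD by blast
  show "supported i e" using \<beta> i by (auto simp: e supported_def uvec_def)
  fix k assume k: "k \<in> {1..i}"
  have "tail_sum i k \<beta> \<le> 1"
  proof (cases "\<beta> = (\<lambda>_. 0)")
    case True
    then show ?thesis by (simp add: tail_sum_def)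
  next
    case False
    then obtain j where "\<beta> = uvec j" using \<beta> by blast
    then show ?thesis by (simp add: tail_sum_uvec)
  qed
  then have "int m * tail_sum i k \<beta> \<le> int m"
    using mult_left_mono[of "tail_sum i k \<beta>" 1 "int m"] by simp
  then show "tail_sum i k e \<le> 0"
    unfolding e tail_sum_lincomb using k by (simp add: tail_sum_uvec)
qed

definition recip_const :: "nat \<Rightarrow> 'a::comm_ring_1 \<Rightarrow> 'a laurent" where
  "recip_const i c = Abs_laurent (lgeom (uvec i) c (\<lambda>_. 0))"

definition recip_var :: "nat \<Rightarrow> 'a::comm_ring_1 \<Rightarrow> nat \<Rightarrow> 'a laurent" where
  "recip_var i c j = Abs_laurent (lgeom (uvec i) c (uvec j))"

lemma lcoeff_recip_const: "1 \<le> i \<Longrightarrow> lcoeff (recip_const i c) = lgeom (uvec i) c (\<lambda>_. 0)"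
  unfolding recip_const_def
  by (rule lcoeff_Abs_laurent) (use tail_bounded_lgeom[of i "\<lambda>_. 0"] in \<open>auto simp: admissible_def\<close>)

lemma lcoeff_recip_var:
  "1 \<le> j \<Longrightarrow> j < i \<Longrightarrow> lcoeff (recip_var i c j) = lgeom (uvec i) c (uvec j)"
  unfolding recip_var_def
  by (rule lcoeff_Abs_laurent) (use tail_bounded_lgeom[of i "uvec j"] in \<open>auto simp: admissible_def\<close>)

lemma lgeom_telescope:
  assumes "\<alpha> \<noteq> \<beta>"
  shows "lgeom \<alpha> c \<beta> (\<lambda>l. e l - \<alpha> l) - c * lgeom \<alpha> c \<beta> (\<lambda>l. e l - \<beta> l) = lconst 1 e"
proof -
  define E where "E e' = lgeom \<alpha> c \<beta> (\<lambda>l. e' l - \<alpha> l)" for e'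
  define ray where "ray m = (\<lambda>l. int m * (\<beta> l - \<alpha> l))" for m :: nat
  define e' where "e' = (\<lambda>l. e l - (\<beta> l - \<alpha> l))"
  have E_ray: "E (ray m) = c ^ m" for m
    unfolding E_def ray_def by (rule lgeom_ray[OF assms])
  have E_off_ray: "E d = 0" if "\<And>m. d \<noteq> ray m" for d
    unfolding E_def using that by (intro lgeom_off_ray) (simp add: ray_def)
  have ray_inj: "ray m = ray m' \<longleftrightarrow> m = m'" for m m'
    unfolding ray_def by (rule ray_eq_iff[OF assms])
  have ray_0: "ray 0 = (\<lambda>_. 0)" by (simp add: ray_def)
  have e'_ray: "e' = ray m \<longleftrightarrow> e = ray (Suc m)" for m
    by (auto simp: e'_def ray_def fun_eq_iff algebra_simps)
  have "lgeom \<alpha> c \<beta> (\<lambda>l. e l - \<beta> l) = E e'"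
    by (simp add: E_def e'_def diff_diff_eq add.commute)
  moreover have "E e - c * E e' = lconst 1 e"
  proof (cases "\<exists>m. e = ray m")
    case True
    then obtain m where e: "e = ray m" by blast
    show ?thesis
    proof (cases m)
      case 0
      then have "E e' = 0" by (intro E_off_ray) (simp add: e'_ray e ray_inj)
      then show ?thesis using E_ray[of 0] e 0 ray_0 by (simp add: lconst_def)
    next
      case (Suc m')
      then have "e' = ray m'" by (simp add: e'_ray e)
      moreover have "e \<noteq> (\<lambda>_. 0)" using ray_inj[of m 0] ray_0 e Suc by simp
      ultimately show ?thesis using E_ray e Suc by (simp add: lconst_def)
    qed
  next
    case False
    then have "E e = 0" "E e' = 0" by (auto intro!: E_off_ray simp: e'_ray)
    moreover have "e \<noteq> ray 0" using False by blast
    ultimately show ?thesis using ray_0 by (simp add: lconst_def)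
  qed
  ultimately show ?thesis by (simp add: E_def)
qed

lemma monom_lgeom_inverse:
  assumes "\<alpha> \<noteq> \<beta>" and \<alpha>: "supported N \<alpha>" and \<beta>: "supported N \<beta>" and "admissible (lgeom \<alpha> c \<beta>)"
  shows "(monom \<alpha> - scalar c * monom \<beta>) * Abs_laurent (lgeom \<alpha> c \<beta>) = 1"
proof (rule lcoeff_inject[THEN iffD1], rule ext)
  fix e
  have "lcoeff ((monom \<alpha> - scalar c * monom \<beta>) * Abs_laurent (lgeom \<alpha> c \<beta>)) e
      = lgeom \<alpha> c \<beta> (\<lambda>l. e l - \<alpha> l) - c * lgeom \<alpha> c \<beta> (\<lambda>l. e l - \<beta> l)"
    by (simp add: left_diff_distrib mult.assoc lcoeff_minus lsub_def lcoeff_scalar_mult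
        lcoeff_monom_mult[OF \<alpha>] lcoeff_monom_mult[OF \<beta>] lcoeff_Abs_laurent assms(4))
  then show "lcoeff ((monom \<alpha> - scalar c * monom \<beta>) * Abs_laurent (lgeom \<alpha> c \<beta>)) e = lcoeff 1 e"
    by (simp add: lgeom_telescope[OF assms(1)] lcoeff_one)
qed

lemma recip_const_inverse:
  assumes i: "1 \<le> i" shows "(U i - scalar c) * recip_const i c = 1"
proof -
  have "uvec i \<noteq> (\<lambda>_. 0)" by (auto simp: uvec_def fun_eq_iff)
  moreover have "U i - scalar c = monom (uvec i) - scalar c * monom (\<lambda>_. 0)"
    by (simp add: U_def monom_zero)
  ultimately show ?thesis
    unfolding recip_const_def
    using monom_lgeom_inverse[of "uvec i" "\<lambda>_. 0" i c] supported_uvec[OF i] supported_zero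
      tail_bounded_lgeom[OF i, of "\<lambda>_. 0" c]
    by (auto simp: admissible_def)
qed

lemma recip_var_inverse:
  assumes j: "1 \<le> j" "j < i" shows "(U i - scalar c * U j) * recip_var i c j = 1"
proof -
  have "uvec i \<noteq> uvec j" using j by (auto simp: uvec_def fun_eq_iff)
  moreover have "supported i (uvec j)" using j by (auto simp: supported_def uvec_def)
  ultimately show ?thesis
    unfolding recip_var_def U_def
    using monom_lgeom_inverse[of "uvec i" "uvec j" i c] supported_uvec[of i]
      tail_bounded_lgeom[of i "uvec j" c] j
    by (auto simp: admissible_def)
qed

section \<open>Specialising a variable and extracting a residue\<close>

definition free_of :: "nat \<Rightarrow> 'a::comm_ring_1 laurent \<Rightarrow> bool" where
  "free_of v M \<longleftrightarrow> (\<forall>a. lcoeff M a \<noteq> 0 \<longrightarrow> a v = 0)"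

definition nonneg_in :: "nat \<Rightarrow> 'a::comm_ring_1 laurent \<Rightarrow> bool" where
  "nonneg_in v M \<longleftrightarrow> (\<forall>a. lcoeff M a \<noteq> 0 \<longrightarrow> 0 \<le> a v)"

lemma free_of_mult: "free_of v A \<Longrightarrow> free_of v B \<Longrightarrow> free_of v (A * B)"
  unfolding free_of_def by (metis diff_self eq_iff_diff_eq_0 lcoeff_times_nonzeroD)

lemma nonneg_in_mult: "nonneg_in v A \<Longrightarrow> nonneg_in v B \<Longrightarrow> nonneg_in v (A * B)"
  unfolding nonneg_in_def by (smt (verit, best) lcoeff_times_nonzeroD)

lemma free_of_add: "free_of v A \<Longrightarrow> free_of v B \<Longrightarrow> free_of v (A + B)"
  unfolding free_of_def lcoeff_plus ladd_def by (metis add.right_neutral add_0)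

lemma nonneg_in_add: "nonneg_in v A \<Longrightarrow> nonneg_in v B \<Longrightarrow> nonneg_in v (A + B)"
  unfolding nonneg_in_def lcoeff_plus ladd_def by (metis add.right_neutral add_0)

lemma free_of_diff: "free_of v A \<Longrightarrow> free_of v B \<Longrightarrow> free_of v (A - B)"
  unfolding free_of_def lcoeff_minus lsub_def by (metis diff_zero diff_self)

lemma nonneg_in_diff: "nonneg_in v A \<Longrightarrow> nonneg_in v B \<Longrightarrow> nonneg_in v (A - B)"
  unfolding nonneg_in_def lcoeff_minus lsub_def by (metis diff_zero diff_self)

lemma free_of_imp_nonneg_in: "free_of v A \<Longrightarrow> nonneg_in v A"
  unfolding free_of_def nonneg_in_def by auto

lemma free_of_scalar: "free_of v (scalar c)"
  unfolding free_of_def lcoeff_scalar lconst_def by metis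

lemma free_of_one: "free_of v 1"
  using free_of_scalar[of v 1] by (simp add: scalar_one)

lemma free_of_prod: "finite S \<Longrightarrow> (\<And>s. s \<in> S \<Longrightarrow> free_of v (F s)) \<Longrightarrow> free_of v (\<Prod>s\<in>S. F s)"
  by (induction S rule: finite_induct) (auto simp: free_of_one free_of_mult)

lemma free_of_U: assumes "1 \<le> i" "i \<noteq> v" shows "free_of v (U i)"
  unfolding free_of_def U_def lcoeff_monom[OF supported_uvec[OF assms(1)]] lmono_def
  using assms(2) by (simp add: uvec_def)

lemma nonneg_in_U: assumes "1 \<le> i" shows "nonneg_in v (U i)"
  unfolding nonneg_in_def U_def lcoeff_monom[OF supported_uvec[OF assms]] lmono_def
  by (simp add: uvec_def)

lemma free_of_U_inv: "1 \<le> i \<Longrightarrow> i \<noteq> v \<Longrightarrow> free_of v (U_inv i)"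
  by (simp add: free_of_def lcoeff_U_inv lmono_def uvec_def)

lemma nonneg_in_U_minus_scalar: "1 \<le> v \<Longrightarrow> nonneg_in v (U v - scalar x)"
  by (intro nonneg_in_diff nonneg_in_U free_of_imp_nonneg_in free_of_scalar)

lemma free_of_recip_const: "1 \<le> i \<Longrightarrow> i \<noteq> v \<Longrightarrow> free_of v (recip_const i c)"
  unfolding free_of_def lcoeff_recip_const by (auto dest!: lgeom_nonzeroD simp: uvec_def)

lemma free_of_recip_var:
  "1 \<le> j \<Longrightarrow> j < i \<Longrightarrow> i \<noteq> v \<Longrightarrow> j \<noteq> v \<Longrightarrow> free_of v (recip_var i c j)"
  unfolding free_of_def by (auto dest!: lgeom_nonzeroD simp: lcoeff_recip_var uvec_def)

lemma nonneg_in_recip_var: "1 \<le> v \<Longrightarrow> v < i \<Longrightarrow> nonneg_in v (recip_var i c v)"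
  unfolding nonneg_in_def by (auto dest!: lgeom_nonzeroD simp: lcoeff_recip_var uvec_def)

text \<open>When L is a polynomial in u_v, specializes v x L M says that M is L evaluated at u_v = x.\<close>

definition specializes :: "nat \<Rightarrow> 'a::comm_ring_1 \<Rightarrow> 'a laurent \<Rightarrow> 'a laurent \<Rightarrow> bool" where
  "specializes v x L M \<longleftrightarrow> free_of v M \<and> (\<exists>Q. nonneg_in v Q \<and> L = M + (U v - scalar x) * Q)"

lemma specializes_refl: "free_of v M \<Longrightarrow> specializes v x M M"
  unfolding specializes_def by (intro conjI exI[of _ 0]) (simp_all add: nonneg_in_def lcoeff_zero)

lemma specializes_U: "1 \<le> v \<Longrightarrow> specializes v x (U v) (scalar x)"
  unfolding specializes_def
  by (intro conjI free_of_scalar exI[of _ 1]) (auto simp: free_of_imp_nonneg_in free_of_one)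

lemma specializes_add:
  assumes "specializes v x L1 M1" "specializes v x L2 M2"
  shows "specializes v x (L1 + L2) (M1 + M2)"
proof -
  obtain Q1 Q2 where M: "free_of v M1" "free_of v M2" and Q: "nonneg_in v Q1" "nonneg_in v Q2"
    and L: "L1 = M1 + (U v - scalar x) * Q1" "L2 = M2 + (U v - scalar x) * Q2"
    using assms by (auto simp: specializes_def)
  have "L1 + L2 = (M1 + M2) + (U v - scalar x) * (Q1 + Q2)"
    unfolding L by (simp add: algebra_simps)
  with M Q show ?thesis
    unfolding specializes_def by (blast intro: free_of_add nonneg_in_add)
qed

lemma specializes_diff:
  assumes "specializes v x L1 M1" "specializes v x L2 M2"
  shows "specializes v x (L1 - L2) (M1 - M2)"
proof -
  obtain Q1 Q2 where M: "free_of v M1" "free_of v M2" and Q: "nonneg_in v Q1" "nonneg_in v Q2"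
    and L: "L1 = M1 + (U v - scalar x) * Q1" "L2 = M2 + (U v - scalar x) * Q2"
    using assms by (auto simp: specializes_def)
  have "L1 - L2 = (M1 - M2) + (U v - scalar x) * (Q1 - Q2)"
    unfolding L by (simp add: algebra_simps)
  with M Q show ?thesis
    unfolding specializes_def by (blast intro: free_of_diff nonneg_in_diff)
qed

lemma specializes_mult:
  assumes v: "1 \<le> v" and "specializes v x L1 M1" "specializes v x L2 M2"
  shows "specializes v x (L1 * L2) (M1 * M2)"
proof -
  obtain Q1 Q2 where M: "free_of v M1" "free_of v M2" and Q: "nonneg_in v Q1" "nonneg_in v Q2"
    and L: "L1 = M1 + (U v - scalar x) * Q1" "L2 = M2 + (U v - scalar x) * Q2"
    using assms by (auto simp: specializes_def)
  have "L1 * L2 = M1 * M2 + (U v - scalar x) * (Q1 * M2 + M1 * Q2 + (U v - scalar x) * Q1 * Q2)"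
    by (simp add: L algebra_simps)
  moreover have "nonneg_in v (Q1 * M2 + M1 * Q2 + (U v - scalar x) * Q1 * Q2)"
    by (intro nonneg_in_add nonneg_in_mult Q free_of_imp_nonneg_in M nonneg_in_U_minus_scalar v)
  ultimately show ?thesis using M by (auto simp: specializes_def intro: free_of_mult)
qed

lemma specializes_prod:
  assumes "1 \<le> v" and "finite S" and "\<And>s. s \<in> S \<Longrightarrow> specializes v x (F s) (G s)"
  shows "specializes v x (\<Prod>s\<in>S. F s) (\<Prod>s\<in>S. G s)"
  using assms(2,3)
  by (induction S rule: finite_induct) (auto simp: specializes_refl free_of_one specializes_mult[OF assms(1)])

lemma specializes_recip_var:
  assumes v: "1 \<le> v" "v < i"
  shows "specializes v x (recip_var i t v) (recip_const i (t * x))"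
proof -
  have i: "1 \<le> i" using v by simp
  let ?G = "recip_var i t v" and ?H = "recip_const i (t * x)"
  have "?G = ?G * ((U i - scalar (t * x)) * ?H)"
    by (simp add: recip_const_inverse[OF i])
  also have "\<dots> = ?H * ((U i - scalar t * U v) * ?G) + (U v - scalar x) * (scalar t * ?G * ?H)"
    by (simp add: scalar_mult algebra_simps)
  also have "\<dots> = ?H + (U v - scalar x) * (scalar t * ?G * ?H)"
    by (simp add: recip_var_inverse[OF v])
  finally have "?G = ?H + (U v - scalar x) * (scalar t * ?G * ?H)" .
  moreover have "nonneg_in v (scalar t * ?G * ?H)"
    using v by (intro nonneg_in_mult free_of_imp_nonneg_in free_of_scalar nonneg_in_recip_var
        free_of_recip_const) auto
  moreover have "free_of v ?H" using v by (intro free_of_recip_const) auto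
  ultimately show ?thesis by (auto simp: specializes_def)
qed

text \<open>Of the expansion u_v/(u_v - x) = sum_m x^m u_v^(-m), only the term m = 0 reaches an
  exponent vector e with e v = 0 when M is free of u_v.\<close>

lemma lcoeff_residue_free:
  assumes v: "1 \<le> v" and M: "free_of v M" and ev: "e v = 0"
  shows "lcoeff (U v * (recip_const v x * M)) e = lcoeff M e"
proof -
  have "uvec v \<noteq> (\<lambda>_. 0)" by (auto simp: uvec_def fun_eq_iff)
  then have one: "lgeom (uvec v) x (\<lambda>_. 0) (\<lambda>l. - uvec v l) = 1"
    using lgeom_ray[of "uvec v" "\<lambda>_. 0" x 0] by simp
  have "lgeom (uvec v) x (\<lambda>_. 0) a * lcoeff M (\<lambda>l. (e l - uvec v l) - a l)
      = (if a = (\<lambda>l. - uvec v l) then lcoeff M e else 0)" for a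
  proof (cases "lgeom (uvec v) x (\<lambda>_. 0) a = 0")
    case True
    then show ?thesis using one by auto
  next
    case False
    obtain m :: nat where a: "a = (\<lambda>l. int m * 0 - (int m + 1) * uvec v l)"
      using lgeom_nonzeroD[OF False] by blast
    have "lcoeff M (\<lambda>l. (e l - uvec v l) - a l) = 0" if "m \<noteq> 0"
      using M that ev unfolding free_of_def by (auto simp: a uvec_def)
    moreover have "a \<noteq> (\<lambda>l. - uvec v l)" if "m \<noteq> 0"
    proof
      assume "a = (\<lambda>l. - uvec v l)"
      then have "a v = - 1" by (simp add: uvec_def)
      with that show False by (simp add: a uvec_def)
    qed
    ultimately show ?thesis using one by (cases "m = 0") (auto simp: a)
  qed
  then have "lcoeff (recip_const v x * M) (\<lambda>l. e l - uvec v l) = lcoeff M e"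
    by (simp add: lcoeff_times lmult_Sum_any admissible_lcoeff lcoeff_recip_const[OF v, symmetric])
  then show ?thesis
    unfolding U_def by (simp add: lcoeff_monom_mult[OF supported_uvec[OF v]])
qed

lemma lcoeff_residue:
  assumes v: "1 \<le> v" and "specializes v x L M" and ev: "e v = 0"
  shows "lcoeff (U v * recip_const v x * L) e = lcoeff M e"
proof -
  obtain Q where M: "free_of v M" and Q: "nonneg_in v Q" and L: "L = M + (U v - scalar x) * Q"
    using assms(2) by (auto simp: specializes_def)
  have "U v * recip_const v x * L = U v * (recip_const v x * M) + U v * Q * ((U v - scalar x) * recip_const v x)"
    by (simp add: L algebra_simps)
  also have "\<dots> = U v * (recip_const v x * M) + U v * Q"
    by (simp add: recip_const_inverse[OF v])
  finally have eq: "U v * recip_const v x * L = U v * (recip_const v x * M) + U v * Q" .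
  have "lcoeff (U v * Q) e = lcoeff Q (\<lambda>l. e l - uvec v l)"
    unfolding U_def by (rule lcoeff_monom_mult[OF supported_uvec[OF v]])
  also have "\<dots> = 0"
    using Q ev unfolding nonneg_in_def by (auto simp: uvec_def)
  finally show ?thesis
    using lcoeff_residue_free[where x=x and e=e, OF v M ev] by (simp add: eq lcoeff_plus ladd_def)
qed

section \<open>Partial fractions\<close>

definition pf_coeff :: "'a::field \<Rightarrow> (nat \<Rightarrow> 'a) \<Rightarrow> nat set \<Rightarrow> nat \<Rightarrow> 'a" where
  "pf_coeff t x S l = (1 - t) * (\<Prod>m\<in>S - {l}. (x l - t * x m) / (x l - x m))"

lemma pf_coeff_insert_new:
  "finite S \<Longrightarrow> y \<notin> S \<Longrightarrow> pf_coeff t x (insert y S) y = (1 - t) * (\<Prod>m\<in>S. (x y - t * x m) / (x y - x m))"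
  by (simp add: pf_coeff_def)

lemma pf_coeff_insert_old:
  assumes "finite S" "y \<notin> S" "l \<in> S" "x l \<noteq> x y"
  shows "pf_coeff t x (insert y S) l = pf_coeff t x S l - (1 - t) * x y * pf_coeff t x S l * (1 / (x y - x l))"
proof -
  have "insert y S - {l} = insert y (S - {l})" using assms by auto
  then have "pf_coeff t x (insert y S) l = (x l - t * x y) / (x l - x y) * pf_coeff t x S l"
    using assms by (simp add: pf_coeff_def)
  also have "\<dots> = pf_coeff t x S l - (1 - t) * x y * pf_coeff t x S l * (1 / (x y - x l))"
    using assms(4) by (simp add: field_simps)
  finally show ?thesis .
qed

text \<open>The partial fraction expansion is proved for the images g_m of 1/(u - x_m) in any
  commutative ring receiving a homomorphism from the field of coefficients, so that it applies both
  in the field itself and to the Laurent series 1/(u_i - x_m).\<close>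

locale ring_hom_of_field =
  fixes \<sigma> :: "'a::field \<Rightarrow> 'r::comm_ring_1"
  assumes hom_add: "\<sigma> (a + b) = \<sigma> a + \<sigma> b"
    and hom_mult: "\<sigma> (a * b) = \<sigma> a * \<sigma> b"
    and hom_one: "\<sigma> 1 = 1"
begin

lemma hom_zero: "\<sigma> 0 = 0"
  using hom_add[of 0 0] by simp

lemma hom_diff: "\<sigma> (a - b) = \<sigma> a - \<sigma> b"
  using hom_add[of "a - b" b] by (simp add: algebra_simps)

lemma hom_sum: "\<sigma> (sum f A) = (\<Sum>a\<in>A. \<sigma> (f a))"
  by (induction A rule: infinite_finite_induct) (simp_all add: hom_zero hom_add)

lemma hom_inverse: "d \<noteq> 0 \<Longrightarrow> \<sigma> (1 / d) * \<sigma> d = 1"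
  by (metis hom_mult hom_one divide_self_if times_divide_eq_left mult_1)

lemma resolvent_identity:
  assumes "(u - \<sigma> a) * g = 1" "(u - \<sigma> b) * h = 1" "a \<noteq> b"
  shows "g * h = \<sigma> (1 / (a - b)) * (g - h)"
proof -
  have "g - h = g * ((u - \<sigma> b) * h) - h * ((u - \<sigma> a) * g)"
    using assms by simp
  also have "\<dots> = g * h * \<sigma> (a - b)"
    by (simp add: hom_diff algebra_simps)
  finally have "\<sigma> (1 / (a - b)) * (g - h) = g * h * (\<sigma> (1 / (a - b)) * \<sigma> (a - b))"
    by (simp add: mult_ac)
  then show ?thesis using hom_inverse[of "a - b"] assms(3) by simp
qed

lemma resolvent_cross_term:
  assumes g: "(u - \<sigma> y) * g = 1" and h: "(u - \<sigma> z) * h = 1" and "z \<noteq> y"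
  shows "\<sigma> (1 - t) * (u * g - 1) * (\<sigma> c * u * h) = \<sigma> ((1 - t) * y * c * (1 / (y - z))) * u * (g - h)"
proof -
  have "u * g - 1 = \<sigma> y * g" using g by (simp add: algebra_simps)
  then have "\<sigma> (1 - t) * (u * g - 1) * (\<sigma> c * u * h) = \<sigma> ((1 - t) * y * c) * u * (g * h)"
    by (simp only: hom_mult) (simp add: mult_ac)
  also have "\<dots> = \<sigma> ((1 - t) * y * c) * u * (\<sigma> (1 / (y - z)) * (g - h))"
    using assms(3) by (simp add: resolvent_identity[OF g h])
  also have "\<dots> = \<sigma> ((1 - t) * y * c * (1 / (y - z))) * u * (g - h)"
    by (simp only: hom_mult) (simp add: mult_ac)
  finally show ?thesis .
qed

lemma partial_fractions_insert:
  assumes fin: "finite S" and y: "y \<notin> S" and dist: "\<And>l. l \<in> S \<Longrightarrow> x l \<noteq> x y"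
    and gy: "(u - \<sigma> (x y)) * g y = 1" and gl: "\<And>l. l \<in> S \<Longrightarrow> (u - \<sigma> (x l)) * g l = 1"
    and IH: "(\<Prod>m\<in>S. (u - \<sigma> (t * x m)) * g m) = \<sigma> (t ^ card S) + (\<Sum>l\<in>S. \<sigma> (pf_coeff t x S l) * u * g l)"
    and field_pf: "(\<Prod>m\<in>S. (x y - t * x m) / (x y - x m))
      = t ^ card S + (\<Sum>l\<in>S. pf_coeff t x S l * x y / (x y - x l))"
  shows "(\<Prod>m\<in>insert y S. (u - \<sigma> (t * x m)) * g m)
    = \<sigma> (t ^ card (insert y S)) + (\<Sum>l\<in>insert y S. \<sigma> (pf_coeff t x (insert y S) l) * u * g l)"
proof -
  define n where "n = card S"
  define c where "c l = pf_coeff t x S l" for l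
  define w where "w l = (1 - t) * x y * c l * (1 / (x y - x l))" for l
  have \<sigma>y: "\<sigma> (x y) * g y = u * g y - 1" using gy by (simp add: algebra_simps)
  have first: "(u - \<sigma> (t * x y)) * g y = 1 + \<sigma> (1 - t) * (u * g y - 1)"
    using gy \<sigma>y by (simp add: hom_mult hom_diff hom_one algebra_simps)
  have cross: "\<sigma> (1 - t) * (u * g y - 1) * (\<sigma> (c l) * u * g l) = \<sigma> (w l) * u * g y - \<sigma> (w l) * u * g l"
    if "l \<in> S" for l
    using resolvent_cross_term[where t=t and c="c l", OF gy gl[OF that] dist[OF that]]
    unfolding w_def by (simp add: right_diff_distrib)
  have "pf_coeff t x (insert y S) y = (1 - t) * t ^ n + (\<Sum>l\<in>S. w l)"
    by (simp add: pf_coeff_insert_new[OF fin y] field_pf n_def c_def w_def sum_distrib_left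
        distrib_left mult_ac)
  then have new: "\<sigma> (pf_coeff t x (insert y S) y) = \<sigma> (1 - t) * \<sigma> (t ^ n) + (\<Sum>l\<in>S. \<sigma> (w l))"
    by (simp add: hom_add hom_sum hom_mult)
  have "t ^ n - (1 - t) * t ^ n = t * t ^ n" by (simp add: algebra_simps)
  then have power: "\<sigma> (t ^ n) - \<sigma> (1 - t) * \<sigma> (t ^ n) = \<sigma> (t * t ^ n)"
    by (metis hom_diff hom_mult)
  have old: "\<sigma> (pf_coeff t x (insert y S) l) = \<sigma> (c l) - \<sigma> (w l)" if "l \<in> S" for l
    using pf_coeff_insert_old[OF fin y that dist[OF that]] by (simp add: c_def w_def hom_diff)
  have "(\<Prod>m\<in>insert y S. (u - \<sigma> (t * x m)) * g m)
      = (1 + \<sigma> (1 - t) * (u * g y - 1)) * (\<sigma> (t ^ n) + (\<Sum>l\<in>S. \<sigma> (c l) * u * g l))"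
    using fin y IH first by (simp add: n_def c_def)
  also have "\<dots> = \<sigma> (t ^ n) + (\<Sum>l\<in>S. \<sigma> (c l) * u * g l) + \<sigma> (1 - t) * (u * g y - 1) * \<sigma> (t ^ n)
      + (\<Sum>l\<in>S. \<sigma> (1 - t) * (u * g y - 1) * (\<sigma> (c l) * u * g l))"
    by (simp add: distrib_left distrib_right sum_distrib_left sum.distrib add_ac)
  also have "\<dots> = \<sigma> (t ^ n) + (\<Sum>l\<in>S. \<sigma> (c l) * u * g l) + \<sigma> (1 - t) * (u * g y - 1) * \<sigma> (t ^ n)
      + (\<Sum>l\<in>S. \<sigma> (w l) * u * g y - \<sigma> (w l) * u * g l)"
    by (simp add: cross)
  also have "\<dots> = (\<sigma> (t ^ n) - \<sigma> (1 - t) * \<sigma> (t ^ n)) + (\<sigma> (1 - t) * \<sigma> (t ^ n) + (\<Sum>l\<in>S. \<sigma> (w l))) * u * g y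
      + (\<Sum>l\<in>S. (\<sigma> (c l) - \<sigma> (w l)) * u * g l)"
    by (simp add: sum_subtractf sum_distrib_left sum_distrib_right algebra_simps)
  also have "\<dots> = \<sigma> (t ^ card (insert y S))
      + (\<Sum>l\<in>insert y S. \<sigma> (pf_coeff t x (insert y S) l) * u * g l)"
    using fin y by (simp add: new old power card_insert_if n_def[symmetric] cong: sum.cong)
  finally show ?thesis .
qed

end

interpretation field_id: ring_hom_of_field "\<lambda>a::'a::field. a"
  by unfold_locales auto

lemma partial_fractions_field:
  fixes x :: "nat \<Rightarrow> 'a::field"
  assumes "finite S" "inj_on x S" "\<forall>m\<in>S. u \<noteq> x m"
  shows "(\<Prod>m\<in>S. (u - t * x m) / (u - x m)) = t ^ card S + (\<Sum>l\<in>S. pf_coeff t x S l * u / (u - x l))"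
  using assms
proof (induction S arbitrary: u rule: finite_induct)
  case empty
  then show ?case by simp
next
  case (insert y S)
  have inj: "inj_on x S" and dist: "\<And>l. l \<in> S \<Longrightarrow> x l \<noteq> x y"
    using insert.prems insert.hyps by (auto simp: inj_on_def)
  have "(\<Prod>m\<in>insert y S. (u - t * x m) * (1 / (u - x m))) =
    t ^ card (insert y S) + (\<Sum>l\<in>insert y S. pf_coeff t x (insert y S) l * u * (1 / (u - x l)))"
    by (rule field_id.partial_fractions_insert[where x=x and t=t and u=u and g="\<lambda>m. 1 / (u - x m)",
          OF insert.hyps(1,2) dist])
      (use insert.prems insert.IH[OF inj] dist in \<open>auto simp: eq_commute[of "x y"]\<close>)
  then show ?case by simp
qed

interpretation scalar_hom: ring_hom_of_field "scalar :: 'a::field \<Rightarrow> 'a laurent"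
  by unfold_locales (simp_all add: scalar_add scalar_mult scalar_one)

lemma partial_fractions_laurent:
  fixes x :: "nat \<Rightarrow> 'a::field"
  assumes v: "1 \<le> v" and "finite S" "inj_on x S"
  shows "(\<Prod>m\<in>S. (U v - scalar (t * x m)) * recip_const v (x m)) =
    scalar (t ^ card S) + (\<Sum>l\<in>S. scalar (pf_coeff t x S l) * U v * recip_const v (x l))"
  using assms(2,3)
proof (induction S rule: finite_induct)
  case empty
  then show ?case by (simp add: scalar_one)
next
  case (insert y S)
  have inj: "inj_on x S" and dist: "\<And>l. l \<in> S \<Longrightarrow> x l \<noteq> x y"
    using insert.prems insert.hyps by (auto simp: inj_on_def)
  have "\<forall>m\<in>S. x y \<noteq> x m" using dist by force
  note field_pf = partial_fractions_field[OF insert.hyps(1) inj this]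
  show ?case
    by (rule scalar_hom.partial_fractions_insert[where x=x and t=t and u="U v" and g="\<lambda>m. recip_const v (x m)",
          OF insert.hyps(1,2) dist])
      (use recip_const_inverse[OF v] insert.IH[OF inj] field_pf in auto)
qed

section \<open>Iterated coefficient extraction\<close>

context
  fixes t :: "'a::field" and x b :: "nat \<Rightarrow> 'a"
begin

text \<open>The generating series written in the variables u_(s+1), ..., u_(s+r) and the points
  x_m, m in S.  Extracting the coefficient of u_(s+1) (lemma lcoeff_gen_product_Suc) leaves the
  same series in u_(s+2), ... with one point removed.\<close>

definition row_factor :: "nat \<Rightarrow> nat set \<Rightarrow> nat \<Rightarrow> 'a laurent" where
  "row_factor s S i = (\<Prod>m\<in>S. (U (s + i) - scalar (t * x m)) * recip_const (s + i) (x m)) *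
     (\<Prod>j\<in>{1..<i}. (U (s + i) - U (s + j)) * recip_var (s + i) t (s + j)) - scalar (t ^ (card S - i + 1))"

definition weight_factor :: "nat \<Rightarrow> (nat \<Rightarrow> nat) \<Rightarrow> nat \<Rightarrow> 'a laurent" where
  "weight_factor s lam i = (\<Prod>k\<in>{1..lam i}. (U (s + i) + scalar (b k)) * U_inv (s + i))"

definition gen_product :: "nat \<Rightarrow> nat set \<Rightarrow> (nat \<Rightarrow> nat) \<Rightarrow> nat \<Rightarrow> 'a laurent" where
  "gen_product s S lam r = (\<Prod>i\<in>{1..r}. row_factor s S i * weight_factor s lam i)"

definition target_exp :: "nat \<Rightarrow> nat \<Rightarrow> (nat \<Rightarrow> nat) \<Rightarrow> nat \<Rightarrow> int" where
  "target_exp s r lam = (\<lambda>l. if s < l \<and> l \<le> s + r then - int (lam (l - s)) else 0)"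

definition factorial_power :: "nat \<Rightarrow> 'a \<Rightarrow> 'a" where
  "factorial_power p y = (\<Prod>k\<in>{1..p}. (y + b k))"

fun HP_rec :: "nat \<Rightarrow> (nat \<Rightarrow> nat) \<Rightarrow> nat set \<Rightarrow> 'a" where
  "HP_rec 0 lam S = 1"
| "HP_rec (Suc r) lam S = (\<Sum>l\<in>S. factorial_power (lam 1) (x l) *
      (\<Prod>m\<in>S - {l}. (x l - t * x m) / (x l - x m)) * HP_rec r (\<lambda>i. lam (Suc i)) (S - {l}))"

lemma row_factor_first:
  assumes "finite S" "inj_on x S" "1 \<le> card S"
  shows "row_factor s S 1 = (\<Sum>l\<in>S. scalar (pf_coeff t x S l) * (U (Suc s) * recip_const (Suc s) (x l)))"
  using assms(3) partial_fractions_laurent[OF _ assms(1,2), of "Suc s" t]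
  by (simp add: row_factor_def mult.assoc)

lemma gen_product_Suc:
  "gen_product s S lam (Suc r) =
    (row_factor s S 1 * weight_factor s lam 1) *
    (\<Prod>i\<in>{1..r}. row_factor s S (Suc i) * weight_factor s lam (Suc i))"
proof -
  have "{1..Suc r} = insert 1 {Suc 1..Suc r}" by auto
  then have "gen_product s S lam (Suc r) = (row_factor s S 1 * weight_factor s lam 1) *
      (\<Prod>i\<in>{Suc 1..Suc r}. row_factor s S i * weight_factor s lam i)"
    by (simp add: gen_product_def)
  then show ?thesis by (simp only: prod.shift_bounds_cl_Suc_ivl)
qed

lemma weight_factor_first:
  "weight_factor s lam 1 = (\<Prod>k\<in>{1..lam 1}. U (Suc s) + scalar (b k)) * U_inv (Suc s) ^ lam 1"
  by (simp add: weight_factor_def prod.distrib)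

lemma weight_factor_shift: "weight_factor s lam (Suc i) = weight_factor (Suc s) (\<lambda>i. lam (Suc i)) i"
  by (simp add: weight_factor_def)

lemma free_of_weight_factor: "1 \<le> i \<Longrightarrow> free_of (Suc s) (weight_factor (Suc s) lam i)"
  unfolding weight_factor_def
  by (intro free_of_prod free_of_mult free_of_add free_of_U free_of_scalar free_of_U_inv) auto

lemma specializes_factorial_power:
  "specializes v y (\<Prod>k\<in>{1..p}. U v + scalar (b k)) (scalar (factorial_power p y))" if "1 \<le> v"
proof -
  have "specializes v y (\<Prod>k\<in>{1..p}. U v + scalar (b k)) (\<Prod>k\<in>{1..p}. scalar y + scalar (b k))"
    using that by (intro specializes_prod) (auto intro!: specializes_add specializes_U specializes_refl free_of_scalar)
  then show ?thesis by (simp add: factorial_power_def scalar_prod scalar_add)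
qed

lemma specializes_cancel:
  assumes "1 \<le> v" "v < w"
  shows "specializes v y (((U w - scalar (t * y)) * recip_const w y) * ((U w - U v) * recip_var w t v)) 1"
proof -
  have w: "1 \<le> w" using assms by simp
  have "specializes v y ((U w - U v) * recip_var w t v) ((U w - scalar y) * recip_const w (t * y))"
    using assms by (intro specializes_mult[OF assms(1)] specializes_diff specializes_refl free_of_U
        specializes_U specializes_recip_var) auto
  moreover have "free_of v ((U w - scalar (t * y)) * recip_const w y)"
    using assms by (intro free_of_mult free_of_diff free_of_U free_of_scalar free_of_recip_const) auto
  ultimately have "specializes v y (((U w - scalar (t * y)) * recip_const w y) * ((U w - U v) * recip_var w t v))
      (((U w - scalar (t * y)) * recip_const w y) * ((U w - scalar y) * recip_const w (t * y)))"
    using specializes_mult[OF assms(1) specializes_refl] by blast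
  moreover have "((U w - scalar (t * y)) * recip_const w y) * ((U w - scalar y) * recip_const w (t * y)) = 1"
    using recip_const_inverse[OF w, of y] recip_const_inverse[OF w, of "t * y"] by (simp add: mult_ac)
  ultimately show ?thesis by simp
qed

lemma specializes_row_factor:
  assumes i: "1 \<le> i" and l: "l \<in> S" and fin: "finite S"
  shows "specializes (Suc s) (x l) (row_factor s S (Suc i)) (row_factor (Suc s) (S - {l}) i)"
proof -
  define v where "v = Suc s"
  define w where "w = Suc s + i"
  have v: "1 \<le> v" "v < w" using i by (simp_all add: v_def w_def)
  have w: "s + Suc i = w" by (simp add: w_def)
  define f where "f m = (U w - scalar (t * x m)) * recip_const w (x m)" for m
  define g where "g j = (U w - U (Suc s + j)) * recip_var w t (Suc s + j)" for j
  define P where "P = (\<Prod>m\<in>S - {l}. f m) * (\<Prod>j\<in>{1..<i}. g j)"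
  define c :: "'a laurent" where "c = scalar (t ^ (card S - Suc i + 1))"
  have prod_S: "(\<Prod>m\<in>S. (U w - scalar (t * x m)) * recip_const w (x m)) = f l * (\<Prod>m\<in>S - {l}. f m)"
    unfolding f_def using fin l by (simp add: prod.remove)
  have "(\<Prod>j\<in>{1..<Suc i}. (U w - U (s + j)) * recip_var w t (s + j))
      = ((U w - U v) * recip_var w t v) * (\<Prod>j\<in>{Suc 1..<Suc i}. (U w - U (s + j)) * recip_var w t (s + j))"
    by (subst prod.atLeast_Suc_lessThan) (use i in \<open>simp_all add: v_def\<close>)
  also have "(\<Prod>j\<in>{Suc 1..<Suc i}. (U w - U (s + j)) * recip_var w t (s + j)) = (\<Prod>j\<in>{1..<i}. g j)"
    unfolding g_def by (subst prod.shift_bounds_Suc_ivl) simp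
  finally have prod_j: "(\<Prod>j\<in>{1..<Suc i}. (U w - U (s + j)) * recip_var w t (s + j))
      = ((U w - U v) * recip_var w t v) * (\<Prod>j\<in>{1..<i}. g j)" .
  have "row_factor s S (Suc i) = (f l * ((U w - U v) * recip_var w t v)) * P - c"
    unfolding row_factor_def w prod_S prod_j P_def c_def by (simp only: mult_ac)
  moreover have "row_factor (Suc s) (S - {l}) i = 1 * P - c"
    using fin l by (simp add: row_factor_def P_def f_def g_def c_def w_def card_Diff_singleton)
  moreover have "free_of v P"
    unfolding P_def f_def g_def using fin v
    by (intro free_of_mult free_of_prod free_of_diff free_of_U free_of_scalar free_of_recip_const
        free_of_recip_var) (auto simp: v_def w_def)
  moreover have "specializes v (x l) (f l * ((U w - U v) * recip_var w t v)) 1"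
    unfolding f_def by (rule specializes_cancel[OF v])
  ultimately show ?thesis
    unfolding v_def[symmetric] c_def
    by (metis specializes_diff specializes_mult[OF v(1)] specializes_refl free_of_scalar)
qed

lemma lcoeff_gen_product_term:
  assumes fin: "finite S" and l: "l \<in> S"
    and IH: "\<And>l. l \<in> S \<Longrightarrow> lcoeff (gen_product (Suc s) (S - {l}) (\<lambda>i. lam (Suc i)) r)
      (target_exp (Suc s) r (\<lambda>i. lam (Suc i))) = (1 - t) ^ r * HP_rec r (\<lambda>i. lam (Suc i)) (S - {l})"
  shows "lcoeff (monom (\<lambda>k. - int (lam 1) * uvec (Suc s) k) * (U (Suc s) * recip_const (Suc s) (x l) *
      ((\<Prod>k\<in>{1..lam 1}. U (Suc s) + scalar (b k)) *
       (\<Prod>i\<in>{1..r}. row_factor s S (Suc i) * weight_factor s lam (Suc i)))))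
      (target_exp s (Suc r) lam)
    = factorial_power (lam 1) (x l) * ((1 - t) ^ r * HP_rec r (\<lambda>i. lam (Suc i)) (S - {l}))"
    (is "lcoeff (?d * (_ * ?L)) _ = _")
proof -
  have v: "1 \<le> Suc s" by simp
  have supp: "supported (Suc s) (\<lambda>k. - int (lam 1) * uvec (Suc s) k)"
    by (auto simp: supported_def uvec_def)
  have shift: "(\<lambda>k. target_exp s (Suc r) lam k - (- int (lam 1) * uvec (Suc s) k))
      = target_exp (Suc s) r (\<lambda>i. lam (Suc i))"
    by (auto simp: target_exp_def uvec_def Suc_diff_Suc fun_eq_iff)
  have spec: "specializes (Suc s) (x l) ?L
      (scalar (factorial_power (lam 1) (x l)) * gen_product (Suc s) (S - {l}) (\<lambda>i. lam (Suc i)) r)"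
    unfolding gen_product_def weight_factor_shift
    by (intro specializes_mult[OF v] specializes_factorial_power[OF v] specializes_prod[OF v]
        specializes_row_factor specializes_refl free_of_weight_factor fin l) auto
  have "lcoeff (?d * (U (Suc s) * recip_const (Suc s) (x l) * ?L)) (target_exp s (Suc r) lam)
      = lcoeff (U (Suc s) * recip_const (Suc s) (x l) * ?L) (target_exp (Suc s) r (\<lambda>i. lam (Suc i)))"
    by (simp only: lcoeff_monom_mult[OF supp] shift)
  also have "\<dots> = lcoeff (scalar (factorial_power (lam 1) (x l)) * gen_product (Suc s) (S - {l}) (\<lambda>i. lam (Suc i)) r)
      (target_exp (Suc s) r (\<lambda>i. lam (Suc i)))"
    by (rule lcoeff_residue[OF v spec]) (simp add: target_exp_def)
  also have "\<dots> = factorial_power (lam 1) (x l) * ((1 - t) ^ r * HP_rec r (\<lambda>i. lam (Suc i)) (S - {l}))"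
    by (simp only: lcoeff_scalar_mult IH[OF l])
  finally show ?thesis .
qed

lemma lcoeff_gen_product_Suc:
  assumes fin: "finite S" and inj: "inj_on x S" and "1 \<le> card S"
    and IH: "\<And>l. l \<in> S \<Longrightarrow> lcoeff (gen_product (Suc s) (S - {l}) (\<lambda>i. lam (Suc i)) r)
      (target_exp (Suc s) r (\<lambda>i. lam (Suc i))) = (1 - t) ^ r * HP_rec r (\<lambda>i. lam (Suc i)) (S - {l})"
  shows "lcoeff (gen_product s S lam (Suc r)) (target_exp s (Suc r) lam) = (1 - t) ^ Suc r * HP_rec (Suc r) lam S"
proof -
  define R where "R = (\<Prod>k\<in>{1..lam 1}. U (Suc s) + scalar (b k)) *
    (\<Prod>i\<in>{1..r}. row_factor s S (Suc i) * weight_factor s lam (Suc i))"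
  have "gen_product s S lam (Suc r) = (\<Sum>l\<in>S. scalar (pf_coeff t x S l) *
      (U (Suc s) * recip_const (Suc s) (x l))) * ((\<Prod>k\<in>{1..lam 1}. U (Suc s) + scalar (b k)) *
      U_inv (Suc s) ^ lam 1) * (\<Prod>i\<in>{1..r}. row_factor s S (Suc i) * weight_factor s lam (Suc i))"
    unfolding gen_product_Suc row_factor_first[OF fin inj assms(3)] weight_factor_first ..
  also have "\<dots> = (\<Sum>l\<in>S. scalar (pf_coeff t x S l) * (U_inv (Suc s) ^ lam 1 *
      (U (Suc s) * recip_const (Suc s) (x l) * R)))"
    by (simp add: R_def sum_distrib_left sum_distrib_right mult_ac)
  also have "(U_inv (Suc s) :: 'a laurent) ^ lam 1 = monom (\<lambda>k. - int (lam 1) * uvec (Suc s) k)"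
    by (rule U_inv_power) simp
  finally have "lcoeff (gen_product s S lam (Suc r)) (target_exp s (Suc r) lam)
      = (\<Sum>l\<in>S. pf_coeff t x S l * lcoeff (monom (\<lambda>k. - int (lam 1) * uvec (Suc s) k) *
          (U (Suc s) * recip_const (Suc s) (x l) * R)) (target_exp s (Suc r) lam))"
    by (simp only: lcoeff_sum lcoeff_scalar_mult)
  also have "\<dots> = (\<Sum>l\<in>S. pf_coeff t x S l *
      (factorial_power (lam 1) (x l) * ((1 - t) ^ r * HP_rec r (\<lambda>i. lam (Suc i)) (S - {l}))))"
    unfolding R_def by (rule sum.cong[OF refl]) (simp only: lcoeff_gen_product_term[OF fin _ IH])
  also have "\<dots> = (1 - t) ^ Suc r * HP_rec (Suc r) lam S"
    by (simp add: pf_coeff_def sum_distrib_left mult_ac)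
  finally show ?thesis .
qed

lemma lcoeff_gen_product:
  "finite S \<Longrightarrow> inj_on x S \<Longrightarrow> r \<le> card S \<Longrightarrow>
   lcoeff (gen_product s S lam r) (target_exp s r lam) = (1 - t) ^ r * HP_rec r lam S"
proof (induction r arbitrary: s S lam)
  case 0
  have "target_exp s 0 lam = (\<lambda>_. 0)" by (simp add: target_exp_def fun_eq_iff)
  then show ?case by (simp add: gen_product_def lcoeff_one lconst_def)
next
  case (Suc r)
  show ?case
  proof (rule lcoeff_gen_product_Suc)
    fix l assume l: "l \<in> S"
    show "lcoeff (gen_product (Suc s) (S - {l}) (\<lambda>i. lam (Suc i)) r) (target_exp (Suc s) r (\<lambda>i. lam (Suc i)))
      = (1 - t) ^ r * HP_rec r (\<lambda>i. lam (Suc i)) (S - {l})"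
      using Suc.prems l by (intro Suc.IH) (auto simp: card_Diff_singleton intro: inj_on_subset)
  qed (use Suc.prems in auto)
qed

end

lemma lprod_cong: "(\<And>i. i \<in> set is \<Longrightarrow> F i = G i) \<Longrightarrow> lprod F is = lprod G is"
  by (induction "is") (simp_all add: lprod_def)

lemma lprod_lcoeff: "lprod (\<lambda>i. lcoeff (F i)) is = lcoeff (prod_list (map F is))"
  by (induction "is") (simp_all add: lprod_def lcoeff_one lcoeff_times)

lemma lprod_lcoeff_upt:
  assumes "\<And>i. i \<in> {a..<b} \<Longrightarrow> F i = lcoeff (G i)"
  shows "lprod F [a..<b] = lcoeff (\<Prod>i\<in>{a..<b}. G i)"
proof -
  have "lprod F [a..<b] = lprod (\<lambda>i. lcoeff (G i)) [a..<b]"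
    by (rule lprod_cong) (use assms in auto)
  then show ?thesis
    by (simp add: lprod_lcoeff prod.distinct_set_conv_list[symmetric])
qed

lemma lcoeff_row_factor:
  fixes x :: "nat \<Rightarrow> 'a::field"
  assumes i: "1 \<le> i"
  shows "lsub (lmult
        (lprod (\<lambda>j. lmult (lsub (uvar i) (lconst (t * x j))) (lgeom (uvec i) (x j) (\<lambda>_. 0))) [1..<n+1])
        (lprod (\<lambda>j. lmult (lsub (uvar i) (uvar j)) (lgeom (uvec i) t (uvec j))) [1..<i]))
      (lconst (t ^ (n - i + 1))) = lcoeff (row_factor t x 0 {1..n} i)"
proof -
  have points: "lprod (\<lambda>j. lmult (lsub (uvar i) (lconst (t * x j))) (lgeom (uvec i) (x j) (\<lambda>_. 0))) [1..<n+1]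
      = lcoeff (\<Prod>j\<in>{1..<n+1}. (U i - scalar (t * x j)) * recip_const i (x j))"
    by (rule lprod_lcoeff_upt) (simp add: lcoeff_times lcoeff_minus lcoeff_U[OF i] lcoeff_scalar lcoeff_recip_const[OF i])
  have earlier: "lprod (\<lambda>j. lmult (lsub (uvar i) (uvar j)) (lgeom (uvec i) t (uvec j))) [1..<i]
      = lcoeff (\<Prod>j\<in>{1..<i}. (U i - U j) * recip_var i t j)"
    by (rule lprod_lcoeff_upt) (simp add: lcoeff_times lcoeff_minus lcoeff_U[OF i] lcoeff_U lcoeff_recip_var)
  have "{1..<n+1} = {1..n}" by auto
  then show ?thesis
    unfolding points earlier by (simp add: row_factor_def lcoeff_minus lcoeff_times lcoeff_scalar)
qed

lemma lcoeff_weight_factor: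
  assumes i: "1 \<le> i"
  shows "lprod (\<lambda>k. lmult (ladd (uvar i) (lconst (b k))) (lmono (\<lambda>l. - uvec i l))) [1..<lam i + 1]
    = lcoeff (weight_factor b 0 lam i)"
proof -
  have "{1..<lam i + 1} = {1..lam i}" by auto
  then have "weight_factor b 0 lam i = (\<Prod>k\<in>{1..<lam i + 1}. (U i + scalar (b k)) * U_inv i)"
    by (simp add: weight_factor_def)
  then show ?thesis
    by (simp only:) (rule lprod_lcoeff_upt,
        simp add: lcoeff_times lcoeff_plus lcoeff_U[OF i] lcoeff_scalar lcoeff_U_inv[OF i])
qed

lemma HP_genser_eq_gen_product:
  fixes x b :: "nat \<Rightarrow> 'a::field"
  shows "HP_genser n r lam x t b e = (1 / (1 - t) ^ r) * lcoeff (gen_product t x b 0 {1..n} lam r) e"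
proof -
  have rows: "lprod (\<lambda>i. lsub (lmult
        (lprod (\<lambda>j. lmult (lsub (uvar i) (lconst (t * x j))) (lgeom (uvec i) (x j) (\<lambda>_. 0))) [1..<n+1])
        (lprod (\<lambda>j. lmult (lsub (uvar i) (uvar j)) (lgeom (uvec i) t (uvec j))) [1..<i]))
      (lconst (t ^ (n - i + 1)))) [1..<r+1]
    = lcoeff (\<Prod>i\<in>{1..<r+1}. row_factor t x 0 {1..n} i)"
    by (rule lprod_lcoeff_upt, rule lcoeff_row_factor) simp
  have weights: "lprod (\<lambda>i. lprod (\<lambda>k. lmult (ladd (uvar i) (lconst (b k))) (lmono (\<lambda>l. - uvec i l)))
      [1..<lam i + 1]) [1..<r+1] = lcoeff (\<Prod>i\<in>{1..<r+1}. weight_factor b 0 lam i)"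
    by (rule lprod_lcoeff_upt, rule lcoeff_weight_factor) simp
  have "{1..<r+1} = {1..r}" by auto
  then have "gen_product t x b 0 {1..n} lam r
      = (\<Prod>i\<in>{1..<r+1}. row_factor t x 0 {1..n} i) * (\<Prod>i\<in>{1..<r+1}. weight_factor b 0 lam i)"
    by (simp add: gen_product_def prod.distrib)
  then show ?thesis
    unfolding HP_genser_def lscale_def rows weights by (simp add: lcoeff_times)
qed

section \<open>Cosets of the Young subgroup and injective words\<close>

definition inj_words :: "nat \<Rightarrow> nat set \<Rightarrow> nat list set" where
  "inj_words r S = {s. distinct s \<and> length s = r \<and> set s \<subseteq> S}"

lemma finite_inj_words: "finite S \<Longrightarrow> finite (inj_words r S)"
  unfolding inj_words_def by (rule finite_subset[OF _ finite_lists_length_eq[of S r]]) auto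

lemma inj_words_0: "inj_words 0 S = {[]}"
  by (auto simp: inj_words_def)

lemma inj_words_Suc: "inj_words (Suc r) S = (\<Union>a\<in>S. (\<lambda>s. a # s) ` inj_words r (S - {a}))"
proof (rule set_eqI)
  fix s
  show "s \<in> inj_words (Suc r) S \<longleftrightarrow> s \<in> (\<Union>a\<in>S. (\<lambda>s. a # s) ` inj_words r (S - {a}))"
    by (cases s) (auto simp: inj_words_def)
qed

context
  fixes t :: "'a::field" and x b :: "nat \<Rightarrow> 'a"
begin

fun HP_word :: "(nat \<Rightarrow> nat) \<Rightarrow> nat set \<Rightarrow> nat list \<Rightarrow> 'a" where
  "HP_word lam S [] = 1"
| "HP_word lam S (a # s) = factorial_power b (lam 1) (x a) * (\<Prod>m\<in>S - {a}. (x a - t * x m) / (x a - x m)) *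
     HP_word (\<lambda>i. lam (Suc i)) (S - {a}) s"

lemma HP_rec_eq_sum_inj_words: "finite S \<Longrightarrow> HP_rec t x b r lam S = (\<Sum>s\<in>inj_words r S. HP_word lam S s)"
proof (induction r arbitrary: lam S)
  case 0
  then show ?case by (simp add: inj_words_0)
next
  case (Suc r)
  have "(\<Sum>s\<in>inj_words (Suc r) S. HP_word lam S s)
      = (\<Sum>a\<in>S. \<Sum>s\<in>(\<lambda>s. a # s) ` inj_words r (S - {a}). HP_word lam S s)"
    unfolding inj_words_Suc by (rule sum.UNION_disjoint) (auto simp: Suc.prems finite_inj_words)
  also have "\<dots> = (\<Sum>a\<in>S. \<Sum>s\<in>inj_words r (S - {a}). HP_word lam S (a # s))"
    by (rule sum.cong, simp, subst sum.reindex) (auto simp: inj_on_def)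
  also have "\<dots> = (\<Sum>a\<in>S. factorial_power b (lam 1) (x a) * (\<Prod>m\<in>S - {a}. (x a - t * x m) / (x a - x m)) *
      HP_rec t x b r (\<lambda>i. lam (Suc i)) (S - {a}))"
    by (rule sum.cong, simp) (simp add: Suc.IH Suc.prems sum_distrib_left)
  finally show ?case by simp
qed

lemma HP_word_map_perm:
  assumes w: "w permutes {1..n}" and "r \<le> n" and "a \<le> r + 1" and "1 \<le> a"
  shows "HP_word (\<lambda>i. lam (i + a - 1)) ({1..n} - w ` {1..<a}) (map w [a..<r+1]) =
    (\<Prod>i\<in>{a..r}. factorial_power b (lam i) (x (w i)) *
      (\<Prod>j\<in>{i+1..n}. (x (w i) - t * x (w j)) / (x (w i) - x (w j))))"
  using assms(3,4)
proof (induction a rule: inc_induct)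
  case base
  then show ?case by simp
next
  case (step a)
  define F where "F i = factorial_power b (lam i) (x (w i)) *
    (\<Prod>j\<in>{i+1..n}. (x (w i) - t * x (w j)) / (x (w i) - x (w j)))" for i
  have upt: "[a..<r+1] = a # [Suc a..<r+1]" using step.hyps by (simp add: upt_conv_Cons)
  have lam: "(\<lambda>i. (\<lambda>i. lam (i + a - 1)) (Suc i)) = (\<lambda>i. lam (i + Suc a - 1))"
    using step.prems by (simp add: fun_eq_iff)
  have "{1..<Suc a} = insert a {1..<a}" using step.prems by auto
  then have remove: "{1..n} - w ` {1..<a} - {w a} = {1..n} - w ` {1..<Suc a}" by auto
  have "{1..n} - w ` {1..<Suc a} = w ` {1..n} - w ` {1..<Suc a}"
    by (simp only: permutes_image[OF w])
  also have "\<dots> = w ` {a+1..n}"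
    by (auto simp: image_set_diff[OF permutes_inj[OF w], symmetric] intro!: arg_cong[where f="(`) w"])
  finally have P: "(\<Prod>m\<in>{1..n} - w ` {1..<Suc a}. (x (w a) - t * x m) / (x (w a) - x m)) =
      (\<Prod>j\<in>{a+1..n}. (x (w a) - t * x (w j)) / (x (w a) - x (w j)))"
    by (simp add: prod.reindex[OF permutes_inj_on[OF w]])
  have IH: "HP_word (\<lambda>i. lam (i + Suc a - 1)) ({1..n} - w ` {1..<Suc a}) (map w [Suc a..<r+1])
      = (\<Prod>i\<in>{Suc a..r}. F i)"
    unfolding F_def by (rule step.IH) simp
  have "HP_word (\<lambda>i. lam (i + a - 1)) ({1..n} - w ` {1..<a}) (map w [a..<r+1]) =
      factorial_power b (lam (1 + a - 1)) (x (w a)) *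
      (\<Prod>m\<in>{1..n} - w ` {1..<a} - {w a}. (x (w a) - t * x m) / (x (w a) - x m)) *
      HP_word (\<lambda>i. (\<lambda>i. lam (i + a - 1)) (Suc i)) ({1..n} - w ` {1..<a} - {w a}) (map w [Suc a..<r+1])"
    unfolding upt by (simp only: list.map HP_word.simps)
  also have "\<dots> = F a * (\<Prod>i\<in>{Suc a..r}. F i)"
    by (simp only: lam remove P IH F_def add_diff_cancel_left')
  also have "\<dots> = (\<Prod>i\<in>{a..r}. F i)"
    using step.hyps by (simp add: prod.atLeast_Suc_atMost)
  finally show ?case by (simp only: F_def)
qed

lemma HP_summand_eq_HP_word:
  assumes "w permutes {1..n}" and "r \<le> n"
  shows "HP_summand n r lam (x \<circ> w) t b = HP_word lam {1..n} (map w [1..<r+1])"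
  using HP_word_map_perm[OF assms, of 1 lam]
  by (simp add: HP_summand_def factorial_power_def prod.distrib)

end

lemma id_in_young_sub: "id \<in> young_sub n r"
  by (simp add: young_sub_def permutes_id)

lemma young_sub_comp: "h1 \<in> young_sub n r \<Longrightarrow> h2 \<in> young_sub n r \<Longrightarrow> h1 \<circ> h2 \<in> young_sub n r"
  by (simp add: young_sub_def permutes_compose)

lemma young_sub_inv:
  assumes "h \<in> young_sub n r" shows "inv h \<in> young_sub n r"
proof -
  have h: "h permutes {1..n}" using assms by (simp add: young_sub_def)
  have "inv h i = i" if "i \<in> {1..r}" for i
    using assms that by (simp add: young_sub_def permutes_inv_eq[OF h])
  then show ?thesis using permutes_inv[OF h] by (simp add: young_sub_def)
qed

lemma coset_absorb:
  assumes h0: "h0 \<in> young_sub n r"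
  shows "(\<lambda>h. (w \<circ> h0) \<circ> h) ` young_sub n r = (\<lambda>h. w \<circ> h) ` young_sub n r"
proof
  show "(\<lambda>h. (w \<circ> h0) \<circ> h) ` young_sub n r \<subseteq> (\<lambda>h. w \<circ> h) ` young_sub n r"
    using young_sub_comp[OF h0] by (auto simp: o_assoc[symmetric])
  have p: "h0 permutes {1..n}" using h0 by (simp add: young_sub_def)
  have "w \<circ> h = (w \<circ> h0) \<circ> (inv h0 \<circ> h)" for h
    by (simp add: fun_eq_iff permutes_inverses(1)[OF p])
  then show "(\<lambda>h. w \<circ> h) ` young_sub n r \<subseteq> (\<lambda>h. (w \<circ> h0) \<circ> h) ` young_sub n r"
    using young_sub_comp[OF young_sub_inv[OF h0]] by blast
qed

lemma coset_eq_if_agree: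
  assumes w1: "w1 permutes {1..n}" and w2: "w2 permutes {1..n}" and "\<forall>i\<in>{1..r}. w1 i = w2 i"
  shows "(\<lambda>h. w1 \<circ> h) ` young_sub n r = (\<lambda>h. w2 \<circ> h) ` young_sub n r"
proof -
  define h0 where "h0 = inv w1 \<circ> w2"
  have "inv w1 (w2 i) = i" if "i \<in> {1..r}" for i
    using assms(3) that permutes_inverses(2)[OF w1, of i] by simp
  then have "h0 \<in> young_sub n r"
    using permutes_compose[OF w2 permutes_inv[OF w1]] by (simp add: young_sub_def h0_def)
  moreover have "w2 = w1 \<circ> h0"
    by (simp add: h0_def o_assoc[symmetric] permutes_inverses(1)[OF w1] fun_eq_iff)
  ultimately show ?thesis by (simp add: coset_absorb)
qed

lemma SOME_coset_agree:
  assumes C: "C = (\<lambda>h. w \<circ> h) ` young_sub n r" and "i \<in> {1..r}"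
  shows "(SOME w. w \<in> C) i = w i"
proof -
  have "w \<in> C" unfolding C by (rule image_eqI[of _ _ id]) (simp_all add: id_in_young_sub)
  then have "(SOME w. w \<in> C) \<in> C" by (rule someI[of "\<lambda>w. w \<in> C"])
  then obtain h where "h \<in> young_sub n r" and "(SOME w. w \<in> C) = w \<circ> h" using C by blast
  then show ?thesis using assms(2) by (simp add: young_sub_def)
qed

lemma coset_SOME:
  assumes "C \<in> cosets_Sn n r"
  shows "(SOME w. w \<in> C) permutes {1..n}" and "C = (\<lambda>h. (SOME w. w \<in> C) \<circ> h) ` young_sub n r"
proof -
  obtain w where w: "w permutes {1..n}" and C: "C = (\<lambda>h. w \<circ> h) ` young_sub n r"
    using assms by (auto simp: cosets_Sn_def)
  have "w \<in> C" unfolding C by (rule image_eqI[of _ _ id]) (simp_all add: id_in_young_sub)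
  then have "(SOME w. w \<in> C) \<in> C" by (rule someI[of "\<lambda>w. w \<in> C"])
  then obtain h0 where h0: "h0 \<in> young_sub n r" and eq: "(SOME w. w \<in> C) = w \<circ> h0"
    using C by blast
  show "(SOME w. w \<in> C) permutes {1..n}"
    using eq h0 w by (simp add: young_sub_def permutes_compose)
  have "(\<lambda>h. (SOME w. w \<in> C) \<circ> h) ` young_sub n r = (\<lambda>h. (w \<circ> h0) \<circ> h) ` young_sub n r"
    by (simp only: eq)
  also have "\<dots> = C" by (simp only: coset_absorb[OF h0] C)
  finally show "C = (\<lambda>h. (SOME w. w \<in> C) \<circ> h) ` young_sub n r" ..
qed

lemma extend_to_permutation:
  assumes ds: "distinct s" and ls: "length s = r" and sub_s: "set s \<subseteq> {1..n}" and rn: "r \<le> n"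
  shows "\<exists>w. w permutes {1..n} \<and> map w [1..<r+1] = s"
proof -
  define A where "A = {r+1..n}"
  define B where "B = {1..n} - set s"
  have "card (set s) = r" using ds ls by (simp add: distinct_card)
  then have "card A = card B" using sub_s by (simp add: A_def B_def card_Diff_subset)
  then obtain g where g: "bij_betw g A B"
    using finite_same_card_bij[of A B] by (auto simp: A_def B_def)
  define w where "w i = (if i \<in> {1..r} then s ! (i - 1) else if i \<in> A then g i else i)" for i
  have "inj_on w {1..r}"
    using ds ls by (auto simp: inj_on_def w_def nth_eq_iff_index_eq)
  moreover have "w ` {1..r} = set s"
  proof
    show "w ` {1..r} \<subseteq> set s" using ls by (auto simp: w_def)
    show "set s \<subseteq> w ` {1..r}"
    proof
      fix z assume "z \<in> set s"
      then obtain k where "k < r" "s ! k = z" using ls by (auto simp: in_set_conv_nth)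
      then show "z \<in> w ` {1..r}" by (intro image_eqI[of _ _ "Suc k"]) (auto simp: w_def)
    qed
  qed
  ultimately have "bij_betw w {1..r} (set s)" by (simp add: bij_betw_def)
  moreover have "bij_betw w A B"
    by (rule bij_betw_cong[THEN iffD1, OF _ g]) (auto simp: w_def A_def)
  ultimately have "bij_betw w ({1..r} \<union> A) (set s \<union> B)"
    by (rule bij_betw_combine) (auto simp: B_def)
  moreover have "{1..r} \<union> A = {1..n}" "set s \<union> B = {1..n}"
    using rn sub_s by (auto simp: A_def B_def)
  ultimately have "w permutes {1..n}"
    by (intro bij_imp_permutes) (auto simp: w_def A_def)
  moreover have "map w [1..<r+1] = s"
    using ls by (intro nth_equalityI) (simp_all add: w_def del: upt_Suc)
  ultimately show ?thesis by blast
qed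

lemma inj_on_coset_words: "inj_on (\<lambda>C. map (SOME w. w \<in> C) [1..<r+1]) (cosets_Sn n r)"
proof (rule inj_onI)
  fix C1 C2 assume C1: "C1 \<in> cosets_Sn n r" and C2: "C2 \<in> cosets_Sn n r"
    and "map (SOME w. w \<in> C1) [1..<r+1] = map (SOME w. w \<in> C2) [1..<r+1]"
  then have "\<forall>i\<in>set [1..<r+1]. (SOME w. w \<in> C1) i = (SOME w. w \<in> C2) i"
    by (simp only: map_eq_conv)
  then have agree: "\<forall>i\<in>{1..r}. (SOME w. w \<in> C1) i = (SOME w. w \<in> C2) i"
    by auto
  have "C1 = (\<lambda>h. (SOME w. w \<in> C1) \<circ> h) ` young_sub n r" by (rule coset_SOME(2)[OF C1])
  also have "\<dots> = (\<lambda>h. (SOME w. w \<in> C2) \<circ> h) ` young_sub n r"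
    by (rule coset_eq_if_agree[OF coset_SOME(1)[OF C1] coset_SOME(1)[OF C2] agree])
  also have "\<dots> = C2" by (rule coset_SOME(2)[OF C2, symmetric])
  finally show "C1 = C2" .
qed

lemma bij_betw_cosets_inj_words:
  assumes "r \<le> n"
  shows "bij_betw (\<lambda>C. map (SOME w. w \<in> C) [1..<r+1]) (cosets_Sn n r) (inj_words r {1..n})"
proof (rule bij_betw_imageI[OF inj_on_coset_words], intro subset_antisym subsetI)
  fix s assume "s \<in> (\<lambda>C. map (SOME w. w \<in> C) [1..<r+1]) ` cosets_Sn n r"
  then obtain C where C: "C \<in> cosets_Sn n r" and s: "s = map (SOME w. w \<in> C) [1..<r+1]" by blast
  have p: "(SOME w. w \<in> C) permutes {1..n}" by (rule coset_SOME(1)[OF C])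
  have "set s \<subseteq> {1..n}"
  proof
    fix z assume "z \<in> set s"
    then obtain i where i: "i \<in> set [1..<r+1]" and z: "z = (SOME w. w \<in> C) i" unfolding s by auto
    have "i \<in> {1..n}" using i assms by auto
    then show "z \<in> {1..n}" unfolding z by (simp only: permutes_in_image[OF p])
  qed
  then show "s \<in> inj_words r {1..n}"
    by (simp add: inj_words_def s distinct_map permutes_inj_on[OF p])
next
  fix s assume "s \<in> inj_words r {1..n}"
  then obtain w where w: "w permutes {1..n}" and ws: "map w [1..<r+1] = s"
    using extend_to_permutation[OF _ _ _ assms] by (auto simp: inj_words_def)
  define C where "C = (\<lambda>h. w \<circ> h) ` young_sub n r"
  have C: "C \<in> cosets_Sn n r" using w by (auto simp: cosets_Sn_def C_def)
  have "map (SOME w. w \<in> C) [1..<r+1] = s"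
    unfolding ws[symmetric] by (rule map_cong[OF refl]) (auto intro: SOME_coset_agree[OF C_def])
  with C show "s \<in> (\<lambda>C. map (SOME w. w \<in> C) [1..<r+1]) ` cosets_Sn n r" by blast
qed

lemma HP_eq_HP_rec:
  fixes x b :: "nat \<Rightarrow> 'a::field"
  assumes "r \<le> n"
  shows "HP n r lam x t b = HP_rec t x b r lam {1..n}"
proof -
  have "HP n r lam x t b = (\<Sum>C\<in>cosets_Sn n r. HP_word t x b lam {1..n} (map (SOME w. w \<in> C) [1..<r+1]))"
    unfolding HP_def by (rule sum.cong[OF refl]) (simp add: HP_summand_eq_HP_word[OF coset_SOME(1) assms])
  also have "\<dots> = (\<Sum>s\<in>inj_words r {1..n}. HP_word t x b lam {1..n} s)"
    by (rule sum.reindex_bij_betw[OF bij_betw_cosets_inj_words[OF assms]])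
  also have "\<dots> = HP_rec t x b r lam {1..n}"
    by (simp add: HP_rec_eq_sum_inj_words)
  finally show ?thesis .
qed

text \<open>The identity holds for every lam.\<close>

theorem mainTheorem13:
  fixes n r :: nat and lam :: "nat \<Rightarrow> nat"
    and x b :: "nat \<Rightarrow> 'a::field" and t :: 'a
  assumes "r \<le> n"
    and "\<forall>i\<in>{1..r}. 0 < lam i"
    and "\<forall>i\<in>{1..r}. \<forall>j\<in>{1..r}. i \<le> j \<longrightarrow> lam j \<le> lam i"
    and "inj_on x {1..n}"
    and "t \<noteq> 1"
  shows "HP n r lam x t b =
         HP_genser n r lam x t b (\<lambda>l. if l \<in> {1..r} then - int (lam l) else 0)"
proof -
  have "(\<lambda>l. if l \<in> {1..r} then - int (lam l) else 0) = target_exp 0 r lam"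
    by (auto simp: target_exp_def fun_eq_iff)
  then have "HP_genser n r lam x t b (\<lambda>l. if l \<in> {1..r} then - int (lam l) else 0)
      = (1 / (1 - t) ^ r) * ((1 - t) ^ r * HP_rec t x b r lam {1..n})"
    using lcoeff_gen_product[of "{1..n}" x r t b 0 lam] assms(1,4)
    by (simp add: HP_genser_eq_gen_product)
  also have "\<dots> = HP n r lam x t b"
    using assms(5) by (simp add: HP_eq_HP_rec[OF assms(1)])
  finally show ?thesis ..
qed

end
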